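(* Let $n\ge 1$ and let $f,g\in O(n+1)\cong \mathbf I(\mathbb S^n)$. Then $\tilde\sigma_f=\tilde\sigma_g$ if and only if $f$ and $g$ have the same $O(n+1)$-orbit type, i.e. if and only if their centralizers $O(n+1)_f=\{h\in O(n+1): hf=fh\}$ and $O(n+1)_g$ are conjugate subgroups of $O(n+1)$.
   Context: The isometry group of the unit sphere $\mathbb S^n\subset\mathbb R^{n+1}$ is identified with $O(n+1)$, acting on itself by conjugation; two elements of a group have the same orbit type iff their isotropy groups (centralizers) are conjugate. Segre symbol of an orthogonal map: for $A\in O(m)$, $\tilde\sigma_A$ consists of (a) the multiset $\{n_1,\dots,n_s\}$ where $\{\lambda_1,\bar\lambda_1\},\dots,\{\lambda_s,\bar\lambda_s\}$ are the distinct pairs of non-real complex eigenvalues of $A$ and $n_i=\dim_{\mathbb C}\ker(A-\lambda_i)$, and (b) the multiset $\{m_1,m_2\}$ (possibly with fewer than two entries) of the numbers $\dim\ker(A-\varepsilon)$ for those $\varepsilon\in\{1,-1\}$ that are eigenvalues of $A$. It is written $[(n_1\bar n_1),\dots,(n_s\bar n_s),m_1,m_2]$ with $n_1\ge\dots\ge n_s$, $m_1\ge m_2$. Note that whether a given $m_i$ comes from eigenvalue $1$ or $-1$ is not recorded. *)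

theory Defs
  imports "HOL-Analysis.Analysis" "HOL-Library.Multiset"
begin

text \<open>The orthogonal group O(m), realised as orthogonal real m x m matrices
  (the dimension m is the cardinality of the finite index type 'n).\<close>
definition orth_group :: "(real^'n^'n) set" where
  "orth_group = {A. orthogonal_matrix A}"

definition centralizer_O :: "real^'n^'n \<Rightarrow> (real^'n^'n) set" where
  "centralizer_O f = {h \<in> orth_group. h ** f = f ** h}"

definition cmat :: "real^'n^'n \<Rightarrow> complex^'n^'n" where
  "cmat A = (\<chi> i j. complex_of_real (A $ i $ j))"

definition ceig_dim :: "real^'n^'n \<Rightarrow> complex \<Rightarrow> nat" where
  "ceig_dim A z = vec.dim {v :: complex^'n. cmat A *v v = z *s v}"

definition reig_dim :: "real^'n^'n \<Rightarrow> real \<Rightarrow> nat" where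
  "reig_dim A e = vec.dim {v :: real^'n. A *v v = e *s v}"

text \<open>Non-real complex eigenvalues, one representative (positive imaginary part)
  of each conjugate pair.\<close>
definition nonreal_eig_reps :: "real^'n^'n \<Rightarrow> complex set" where
  "nonreal_eig_reps A = {z. Im z > 0 \<and> (\<exists>v :: complex^'n. v \<noteq> 0 \<and> cmat A *v v = z *s v)}"

definition pm1_eigs :: "real^'n^'n \<Rightarrow> real set" where
  "pm1_eigs A = {e \<in> {1, -1}. \<exists>v :: real^'n. v \<noteq> 0 \<and> A *v v = e *s v}"

text \<open>Segre symbol: the multiset of the n_i and the multiset of the m_j
  (sorting/writing convention is irrelevant for equality of multisets).\<close>
definition segre :: "real^'n^'n \<Rightarrow> nat multiset \<times> nat multiset" where
  "segre A = (image_mset (ceig_dim A) (mset_set (nonreal_eig_reps A)),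
              image_mset (reig_dim A) (mset_set (pm1_eigs A)))"

end

theory Submission
  imports Defs
begin

text \<open>
  The proof works with the eigenspaces \<open>W c\<close> of the symmetric operator \<open>F + F\<^sup>T\<close>, the
  \<^emph>\<open>blocks\<close> of \<open>F\<close>.  Their eigenvalues lie in \<open>[-2, 2]\<close> and, by the spectral theorem
  (proved here from the Rayleigh quotient), \<open>\<real>\<^sup>m\<close> is their orthogonal sum.  On \<open>W (\<plusminus>2)\<close>
  the map \<open>F\<close> is \<open>\<plusminus>1\<close>; on a rotation block \<open>W c\<close>, \<open>\<bar>c\<bar> < 2\<close>, it is \<open>cos \<theta> + sin \<theta> J\<close>
  for an isometric complex structure \<open>J\<close>, where \<open>c = 2 cos \<theta>\<close>.  The \<^emph>\<open>block data\<close> of \<open>F\<close>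
  are the dimensions and types of its blocks, up to relabelling.
  \<^enum> The commutant of \<open>F\<close> consists of the linear maps preserving each block and commuting
    with \<open>J\<close> on rotation blocks.
  \<^enum> Equal commutants force equal blocks of equal types: (complex) reflections and block
    reflections lie in the commutant and detect the blocks.
  \<^enum> Complex structures of equal dimension are isometric; assembling such isometries block
    by block, equal block data yield an orthogonal \<open>k\<close> conjugating one commutant onto the
    other.  Conversely, conjugation preserves block data, so conjugate commutants reduce to
    equal commutants.
  \<^enum> Through the complexification, the Segre symbol records exactly the block data: the
    rotation block \<open>W c\<close> is the realification of the eigenspace for \<open>e\<^sup>i\<^sup>\<theta>\<close>, and the real
    blocks are the eigenspaces for \<open>\<plusminus>1\<close>.
\<close>

section \<open>Eigenvectors of symmetric operators\<close>

text \<open>The maximum of the Rayleigh quotient of a linear map on the unit sphere of a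
  nonzero subspace; it exists by compactness.\<close>
lemma rayleigh_maximum_exists:
  fixes s :: "'a::euclidean_space \<Rightarrow> 'a"
  assumes lin: "linear s" and U: "subspace U" and ne: "U \<noteq> {0}"
  obtains x0 where "x0 \<in> U" "x0 \<bullet> x0 = 1" "\<And>z. z \<in> U \<Longrightarrow> z \<bullet> s z \<le> (x0 \<bullet> s x0) * (z \<bullet> z)"
proof -
  define K where "K = U \<inter> sphere 0 1"
  have "compact K" unfolding K_def
    by (simp add: U closed_subspace closed_Int_compact)
  obtain u where "u \<in> U" "u \<noteq> 0" using ne U subspace_0 by blast
  then have "u /\<^sub>R norm u \<in> K" using U by (simp add: K_def subspace_scale)
  then have "K \<noteq> {}" by blast
  have "continuous_on K (\<lambda>x. x \<bullet> s x)"
    using lin linear_conv_bounded_linear by (intro continuous_intros linear_continuous_on) auto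
  then obtain x0 where x0K: "x0 \<in> K" and max: "\<And>y. y \<in> K \<Longrightarrow> y \<bullet> s y \<le> x0 \<bullet> s x0"
    using continuous_attains_sup[OF \<open>compact K\<close> \<open>K \<noteq> {}\<close>] by blast
  have "z \<bullet> s z \<le> (x0 \<bullet> s x0) * (z \<bullet> z)" if "z \<in> U" for z
  proof (cases "z = 0")
    case True then show ?thesis using lin by (simp add: linear_0)
  next
    case False
    then have "z /\<^sub>R norm z \<in> K" using that U by (simp add: K_def subspace_scale)
    then have "(z /\<^sub>R norm z) \<bullet> s (z /\<^sub>R norm z) \<le> x0 \<bullet> s x0" by (rule max)
    then have "(z \<bullet> s z) / (norm z)^2 \<le> x0 \<bullet> s x0"
      using lin by (simp add: linear_scale inner_commute power2_eq_square divide_inverse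
          mult.commute mult.left_commute)
    then show ?thesis using False by (simp add: divide_le_eq dot_square_norm)
  qed
  moreover have "x0 \<in> U" "x0 \<bullet> x0 = 1" using x0K by (auto simp: K_def dot_square_norm)
  ultimately show thesis using that by blast
qed

text \<open>If \<open>2 t a \<le> t\<^sup>2 b\<close> for all \<open>t > 0\<close>, then \<open>a \<le> 0\<close> (let \<open>t\<close> tend to zero).\<close>
lemma small_perturbation_bound:
  fixes a b :: real
  assumes "\<And>t. t > 0 \<Longrightarrow> 2 * t * a \<le> t^2 * b"
  shows "a \<le> 0"
proof (rule ccontr)
  assume "\<not> a \<le> 0"
  define t where "t = a / (\<bar>b\<bar> + 1)"
  have t: "t > 0" using \<open>\<not> a \<le> 0\<close> by (simp add: t_def add_pos_nonneg)
  have "2 * t * a \<le> t^2 * b" using assms[OF t] .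
  also have "\<dots> \<le> t^2 * (\<bar>b\<bar> + 1)" by (simp add: mult_left_mono)
  also have "\<dots> = t * a" by (simp add: t_def power2_eq_square)
  finally have "t * a \<le> 0" by (simp add: mult.commute)
  moreover have "t * a > 0" using t \<open>\<not> a \<le> 0\<close> by simp
  ultimately show False by simp
qed

text \<open>Perturbing \<open>x0\<close> in the direction of the
  defect \<open>y = s x0 - l x0\<close> would otherwise increase the quotient.\<close>
lemma rayleigh_maximiser_is_eigenvector:
  fixes s :: "'a::euclidean_space \<Rightarrow> 'a"
  assumes lin: "linear s" and sym: "\<And>x y. s x \<bullet> y = x \<bullet> s y"
    and U: "subspace U" and inv: "\<And>x. x \<in> U \<Longrightarrow> s x \<in> U"
    and x0U: "x0 \<in> U" and xx: "x0 \<bullet> x0 = 1"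
    and max: "\<And>z. z \<in> U \<Longrightarrow> z \<bullet> s z \<le> (x0 \<bullet> s x0) * (z \<bullet> z)"
  shows "s x0 = (x0 \<bullet> s x0) *\<^sub>R x0"
proof -
  define l where "l = x0 \<bullet> s x0"
  define y where "y = s x0 - l *\<^sub>R x0"
  have yU: "y \<in> U" unfolding y_def using x0U inv U by (simp add: subspace_diff subspace_scale)
  have x0y: "x0 \<bullet> y = 0" unfolding y_def l_def using xx by (simp add: inner_diff_right)
  have ysx: "y \<bullet> s x0 = y \<bullet> y"
    using x0y by (simp add: y_def inner_diff_right inner_commute)
  have ineq: "2 * t * (y \<bullet> y) \<le> t^2 * (l * (y \<bullet> y) - y \<bullet> s y)" if "t > 0" for t
  proof -
    have "x0 + t *\<^sub>R y \<in> U" using x0U yU U by (simp add: subspace_add subspace_scale)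
    then have h: "(x0 + t *\<^sub>R y) \<bullet> s (x0 + t *\<^sub>R y) \<le> l * ((x0 + t *\<^sub>R y) \<bullet> (x0 + t *\<^sub>R y))"
      unfolding l_def by (rule max)
    have "s (x0 + t *\<^sub>R y) = s x0 + t *\<^sub>R s y" using lin by (simp add: linear_add linear_scale)
    moreover have "x0 \<bullet> s y = y \<bullet> s x0" using sym[of y x0] by (simp add: inner_commute)
    ultimately have "(x0 + t *\<^sub>R y) \<bullet> s (x0 + t *\<^sub>R y) = l + 2 * t * (y \<bullet> y) + t^2 * (y \<bullet> s y)"
      using ysx l_def by (simp add: inner_add_left inner_add_right power2_eq_square algebra_simps)
    moreover have "(x0 + t *\<^sub>R y) \<bullet> (x0 + t *\<^sub>R y) = 1 + t^2 * (y \<bullet> y)"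
      using x0y xx by (simp add: inner_add_left inner_add_right inner_commute power2_eq_square algebra_simps)
    ultimately show ?thesis using h by (simp add: algebra_simps)
  qed
  have "y \<bullet> y \<le> 0" using ineq by (rule small_perturbation_bound)
  then have "y = 0" by (metis inner_eq_zero_iff order_antisym inner_ge_zero)
  then show ?thesis by (simp add: y_def l_def)
qed

lemma symmetric_operator_eigenvector:
  fixes s :: "'a::euclidean_space \<Rightarrow> 'a" and U :: "'a set"
  assumes lin: "linear s" and sym: "\<And>x y. s x \<bullet> y = x \<bullet> s y"
    and U: "subspace U" and inv: "\<And>x. x \<in> U \<Longrightarrow> s x \<in> U" and ne: "U \<noteq> {0}"
  obtains x l where "x \<in> U" "x \<noteq> 0" "s x = l *\<^sub>R x"
proof -
  obtain x0 where "x0 \<in> U" "x0 \<bullet> x0 = 1" "\<And>z. z \<in> U \<Longrightarrow> z \<bullet> s z \<le> (x0 \<bullet> s x0) * (z \<bullet> z)"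
    using rayleigh_maximum_exists[OF lin U ne] by blast
  moreover from this have "s x0 = (x0 \<bullet> s x0) *\<^sub>R x0"
    by (intro rayleigh_maximiser_is_eigenvector[OF lin sym U inv])
  ultimately show thesis using that by fastforce
qed

section \<open>Orthogonal projection onto a subspace\<close>

definition oproj :: "'a::euclidean_space set \<Rightarrow> 'a \<Rightarrow> 'a" where
  "oproj W x = (SOME p. p \<in> W \<and> (\<forall>w\<in>W. (x - p) \<bullet> w = 0))"

lemma oproj_spec:
  assumes "subspace W"
  shows "oproj W x \<in> W \<and> (\<forall>w\<in>W. (x - oproj W x) \<bullet> w = 0)"
proof -
  obtain y z where "y \<in> span W" "\<And>w. w \<in> span W \<Longrightarrow> orthogonal z w" "x = y + z"
    using orthogonal_subspace_decomp_exists by blast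
  moreover have "span W = W" using assms by (simp add: span_eq_iff)
  ultimately have "\<exists>p. p \<in> W \<and> (\<forall>w\<in>W. (x - p) \<bullet> w = 0)"
    by (intro exI[of _ y]) (auto simp: orthogonal_def)
  then show ?thesis unfolding oproj_def by (rule someI_ex)
qed

lemma oproj_in: "subspace W \<Longrightarrow> oproj W x \<in> W"
  using oproj_spec by blast

lemma oproj_perp: "subspace W \<Longrightarrow> w \<in> W \<Longrightarrow> (x - oproj W x) \<bullet> w = 0"
  using oproj_spec by blast

lemma oproj_unique:
  assumes W: "subspace W" and p: "p \<in> W" and o: "\<And>w. w \<in> W \<Longrightarrow> (x - p) \<bullet> w = 0"
  shows "oproj W x = p"
proof -
  have d: "oproj W x - p \<in> W" using oproj_in[OF W] p W by (simp add: subspace_diff)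
  have "(oproj W x - p) \<bullet> (oproj W x - p) = (x - p) \<bullet> (oproj W x - p) - (x - oproj W x) \<bullet> (oproj W x - p)"
    by (simp add: inner_diff_left)
  also have "\<dots> = 0" using o[OF d] oproj_perp[OF W d] by simp
  finally show ?thesis by simp
qed

lemma oproj_id: "subspace W \<Longrightarrow> x \<in> W \<Longrightarrow> oproj W x = x"
  by (rule oproj_unique) auto

lemma oproj_zero: "subspace W \<Longrightarrow> (\<And>w. w \<in> W \<Longrightarrow> x \<bullet> w = 0) \<Longrightarrow> oproj W x = 0"
  by (rule oproj_unique) (auto simp: subspace_0)

lemma oproj_linear: assumes W: "subspace W" shows "linear (oproj W)"
proof (rule linearI)
  fix x y
  show "oproj W (x + y) = oproj W x + oproj W y"
  proof (rule oproj_unique[OF W])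
    show "oproj W x + oproj W y \<in> W" using W oproj_in[OF W] by (simp add: subspace_add)
    fix w assume "w \<in> W"
    then have "(x - oproj W x) \<bullet> w = 0" "(y - oproj W y) \<bullet> w = 0" by (auto intro: oproj_perp[OF W])
    then show "(x + y - (oproj W x + oproj W y)) \<bullet> w = 0"
      by (simp add: inner_diff_left inner_add_left)
  qed
next
  fix r x
  show "oproj W (r *\<^sub>R x) = r *\<^sub>R oproj W x"
  proof (rule oproj_unique[OF W])
    show "r *\<^sub>R oproj W x \<in> W" using W oproj_in[OF W] by (simp add: subspace_scale)
    fix w assume "w \<in> W"
    then have "(x - oproj W x) \<bullet> w = 0" by (rule oproj_perp[OF W])
    then show "(r *\<^sub>R x - r *\<^sub>R oproj W x) \<bullet> w = 0"
      by (metis inner_scaleR_left mult_zero_right scaleR_right_diff_distrib)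
  qed
qed

lemma oproj_inner: "subspace W \<Longrightarrow> w \<in> W \<Longrightarrow> oproj W x \<bullet> w = x \<bullet> w"
  using oproj_perp[of W w x] by (simp add: inner_diff_left)

lemma unit_vector_in:
  assumes "subspace U" "v \<in> U" "v \<noteq> 0"
  shows "(1 / norm v) *\<^sub>R v \<in> U" "((1 / norm v) *\<^sub>R v) \<bullet> ((1 / norm v) *\<^sub>R v) = 1"
  using assms by (simp_all add: subspace_scale dot_square_norm power2_eq_square)

section \<open>The block decomposition of an orthogonal map\<close>

text \<open>Keep \<open>transpose f *v x\<close> as a matrix-vector product instead of \<open>x v* f\<close>.\<close>
declare transpose_matrix_vector[simp del]

text \<open>On \<open>W c\<close> the map \<open>F\<close> satisfies \<open>F\<^sup>2 - c F + 1 = 0\<close>.\<close>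
locale orth_map =
  fixes f :: "real^'n^'n"
  assumes orth: "orthogonal_matrix f"
begin

abbreviation F where "F x \<equiv> f *v x"
abbreviation FT where "FT x \<equiv> transpose f *v x"

definition W :: "real \<Rightarrow> (real^'n) set" where
  "W c = {v. F v + FT v = c *\<^sub>R v}"

definition spec :: "real set" where "spec = {c. W c \<noteq> {0}}"

lemma FT_F[simp]: "FT (F x) = x"
  using orth unfolding orthogonal_matrix_def
  by (metis matrix_vector_mul_assoc matrix_vector_mul_lid)

lemma F_FT[simp]: "F (FT x) = x"
  using orth unfolding orthogonal_matrix_def
  by (metis matrix_vector_mul_assoc matrix_vector_mul_lid)

lemma F_adj: "F x \<bullet> y = x \<bullet> FT y"
  by (metis dot_lmul_matrix inner_commute transpose_matrix_vector)

lemma FT_adj: "FT x \<bullet> y = x \<bullet> F y"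
  using F_adj[of y x] by (simp add: inner_commute)

lemma F_inner[simp]: "F x \<bullet> F y = x \<bullet> y"
  by (simp only: F_adj FT_F)

lemma F_norm[simp]: "norm (F x) = norm x"
  by (simp add: norm_eq_sqrt_inner)

lemma linF: "linear F" by (simp add: matrix_vector_mul_linear)
lemma linFT: "linear FT" by (simp add: matrix_vector_mul_linear)

lemma F_orth: "orthogonal_transformation F"
  by (simp add: orthogonal_transformation)

lemma S_sym: "(F x + FT x) \<bullet> y = x \<bullet> (F y + FT y)"
  by (simp add: inner_add_left inner_add_right F_adj FT_adj)

lemma W_sub: "subspace (W c)"
  unfolding W_def subspace_def
  apply (simp add: matrix_vector_right_distrib matrix_vector_mult_scaleR scaleR_right_distrib algebra_simps)
  by (metis scaleR_right_distrib scaleR_scaleR)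

lemma W_nonzero: assumes "c \<in> spec" obtains x where "x \<in> W c" "x \<noteq> 0"
  using assms W_sub subspace_0 unfolding spec_def by blast

lemma W_F: "x \<in> W c \<Longrightarrow> F x \<in> W c"
proof -
  assume "x \<in> W c"
  then have "F (F x + FT x) = c *\<^sub>R F x" by (simp add: W_def matrix_vector_mult_scaleR)
  then show "F x \<in> W c" by (simp add: W_def matrix_vector_right_distrib add.commute)
qed

lemma W_FT_eq: "x \<in> W c \<Longrightarrow> FT x = c *\<^sub>R x - F x"
  by (simp add: W_def algebra_simps)

lemma W_FT: "x \<in> W c \<Longrightarrow> FT x \<in> W c"
  using W_FT_eq W_F W_sub by (metis subspace_diff subspace_scale)

lemma W_FF: "x \<in> W c \<Longrightarrow> F (F x) = c *\<^sub>R F x - x"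
proof -
  assume "x \<in> W c"
  then have "FT (F x) = c *\<^sub>R F x - F (F x)" using W_F W_FT_eq by blast
  then show ?thesis by (simp add: algebra_simps)
qed

lemma FF_W: assumes "F (F x) = c *\<^sub>R F x - x" shows "x \<in> W c"
proof -
  have "FT (F (F x)) = FT (c *\<^sub>R F x - x)" using assms by simp
  then have "F x = c *\<^sub>R x - FT x" by (simp add: matrix_vector_mult_diff_distrib matrix_vector_mult_scaleR)
  then show ?thesis by (simp add: W_def)
qed

lemma W_dot: "x \<in> W c \<Longrightarrow> 2 * (F x \<bullet> x) = c * (x \<bullet> x)"
proof -
  assume "x \<in> W c"
  then have "(F x + FT x) \<bullet> x = c * (x \<bullet> x)" by (simp add: W_def)
  moreover have "FT x \<bullet> x = F x \<bullet> x" by (metis F_adj inner_commute)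
  ultimately show ?thesis by (simp add: inner_add_left)
qed

lemma W_orth: "x \<in> W c \<Longrightarrow> y \<in> W d \<Longrightarrow> c \<noteq> d \<Longrightarrow> x \<bullet> y = 0"
proof -
  assume x: "x \<in> W c" and y: "y \<in> W d" and cd: "c \<noteq> d"
  have "(F x + FT x) \<bullet> y = x \<bullet> (F y + FT y)" by (rule S_sym)
  then have "c * (x \<bullet> y) = d * (x \<bullet> y)" using x y by (simp add: W_def)
  then show ?thesis using cd by simp
qed

lemma W_incl_eq: assumes c: "c \<in> spec" and "W c \<subseteq> W c'" shows "c = c'"
proof (rule ccontr)
  assume "c \<noteq> c'"
  obtain u where u: "u \<in> W c" "u \<noteq> 0" using W_nonzero[OF c] .
  then have "u \<bullet> u = 0" using W_orth[OF u(1), of u c'] assms(2) \<open>c \<noteq> c'\<close> by auto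
  then show False using u(2) by simp
qed

text \<open>By Cauchy--Schwarz, the eigenvalues lie in \<open>[-2, 2]\<close>.\<close>
lemma W_bound: "x \<in> W c \<Longrightarrow> x \<noteq> 0 \<Longrightarrow> \<bar>c\<bar> \<le> 2"
proof -
  assume x: "x \<in> W c" "x \<noteq> 0"
  have "\<bar>F x \<bullet> x\<bar> \<le> norm (F x) * norm x" by (rule Cauchy_Schwarz_ineq2)
  then have q: "\<bar>F x \<bullet> x\<bar> \<le> x \<bullet> x" by (simp add: dot_square_norm power2_eq_square)
  have p: "x \<bullet> x > 0" using x by simp
  have "\<bar>c\<bar> * (x \<bullet> x) = \<bar>c * (x \<bullet> x)\<bar>" using p by (simp add: abs_mult)
  also have "\<dots> = 2 * \<bar>F x \<bullet> x\<bar>" using W_dot[OF x(1)] by (metis abs_mult abs_numeral)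
  also have "\<dots> \<le> 2 * (x \<bullet> x)" using q by simp
  finally show ?thesis using p by simp
qed

lemma spec_bound: "c \<in> spec \<Longrightarrow> \<bar>c\<bar> \<le> 2"
  using W_nonzero W_bound by metis

lemma W_2: "W 2 = {x. F x = x}"
proof safe
  fix x assume x: "x \<in> W 2"
  have "(F x - x) \<bullet> (F x - x) = F x \<bullet> F x - 2 * (F x \<bullet> x) + x \<bullet> x"
    by (simp add: inner_diff_left inner_diff_right inner_commute)
  also have "\<dots> = 0" using W_dot[OF x] by simp
  finally show "F x = x" by simp
next
  fix x assume "F x = x"
  then have "FT x = x" by (metis FT_F)
  then show "x \<in> W 2" using \<open>F x = x\<close> by (simp add: W_def scaleR_2)
qed

lemma W_m2: "W (-2) = {x. F x = - x}"
proof safe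
  fix x assume x: "x \<in> W (-2)"
  have "(F x + x) \<bullet> (F x + x) = F x \<bullet> F x + 2 * (F x \<bullet> x) + x \<bullet> x"
    by (simp add: inner_add_left inner_add_right inner_commute)
  also have "\<dots> = 0" using W_dot[OF x] by simp
  finally show "F x = - x" by (simp add: eq_neg_iff_add_eq_0)
next
  fix x assume "F x = - x"
  then have "FT x = - x" using linear_neg[OF linFT, of x] by (metis FT_F minus_minus)
  then show "x \<in> W (-2)" using \<open>F x = - x\<close> by (simp add: W_def scaleR_2)
qed

lemma real_block: "c \<in> spec \<Longrightarrow> \<not> \<bar>c\<bar> < 2 \<Longrightarrow> c = 2 \<or> c = -2"
  using spec_bound by fastforce

text \<open>Spectral theorem for \<open>F + F\<^sup>T\<close>: a vector orthogonal to every block is zero, because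
  the orthogonal complement of all blocks is invariant and so would contain an eigenvector.\<close>
lemma orthogonal_to_all_blocks:
  assumes "\<And>c w. w \<in> W c \<Longrightarrow> x \<bullet> w = 0"
  shows "x = 0"
proof (rule ccontr)
  assume x0: "x \<noteq> 0"
  define U where "U = {x. \<forall>c. \<forall>w\<in>W c. x \<bullet> w = 0}"
  have U: "subspace U" unfolding U_def subspace_def by (auto simp: inner_add_left)
  have inv: "F y + FT y \<in> U" if "y \<in> U" for y
    using that unfolding U_def by (auto simp: S_sym W_def)
  have "x \<in> U" using assms by (auto simp: U_def)
  then have "U \<noteq> {0}" using x0 by auto
  moreover have "linear (\<lambda>y. F y + FT y)" using linF linFT by (rule linear_compose_add)
  ultimately obtain y l where y: "y \<in> U" "y \<noteq> 0" "F y + FT y = l *\<^sub>R y"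
    using symmetric_operator_eigenvector[OF _ S_sym U inv] by blast
  then have "y \<in> W l" by (simp add: W_def)
  then have "y \<bullet> y = 0" using y(1) by (auto simp: U_def)
  then show False using y(2) by simp
qed

text \<open>Nonzero vectors from distinct blocks are orthogonal, hence independent, so the spectrum
  is finite.\<close>
lemma finite_spec: "finite spec"
proof -
  have "\<forall>c\<in>spec. \<exists>v. v \<in> W c \<and> v \<noteq> 0" using W_nonzero by metis
  then obtain v where v: "\<And>c. c \<in> spec \<Longrightarrow> v c \<in> W c \<and> v c \<noteq> 0" by metis
  have vv: "v c \<bullet> v d = 0" if "c \<in> spec" "d \<in> spec" "c \<noteq> d" for c d
    using v that W_orth by blast
  have inj: "inj_on v spec"
  proof (rule inj_onI)
    fix c d assume cd: "c \<in> spec" "d \<in> spec" "v c = v d"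
    show "c = d"
    proof (rule ccontr)
      assume "c \<noteq> d"
      then have "v c \<bullet> v d = 0" using vv cd by blast
      then show False using cd v by simp
    qed
  qed
  have "pairwise orthogonal (v ` spec)"
    using vv by (auto simp: pairwise_def orthogonal_def)
  moreover have "0 \<notin> v ` spec" using v by auto
  ultimately have "independent (v ` spec)" by (rule pairwise_orthogonal_independent)
  then have "finite (v ` spec)" using independent_bound_general by blast
  then show ?thesis using inj finite_imageD by blast
qed

lemma block_decomposition: "x = (\<Sum>c\<in>spec. oproj (W c) x)"
proof -
  define y where "y = x - (\<Sum>c\<in>spec. oproj (W c) x)"
  have "y \<bullet> w = 0" if w: "w \<in> W d" for d w
  proof (cases "d \<in> spec")
    case False then have "w = 0" using w by (auto simp: spec_def W_sub subspace_0)
    then show ?thesis by simp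
  next
    case True
    have "(\<Sum>c\<in>spec. oproj (W c) x) \<bullet> w = (\<Sum>c\<in>spec. oproj (W c) x \<bullet> w)" by (simp add: inner_sum_left)
    also have "\<dots> = (\<Sum>c\<in>spec. if c = d then x \<bullet> w else 0)"
      by (rule sum.cong) (auto simp: oproj_inner W_sub w intro!: W_orth[OF oproj_in[OF W_sub] w])
    also have "\<dots> = x \<bullet> w" using True finite_spec by simp
    finally show ?thesis by (simp add: y_def inner_diff_left)
  qed
  then have "y = 0" by (intro orthogonal_to_all_blocks) auto
  then show ?thesis by (simp add: y_def)
qed

lemma oproj_F: "oproj (W c) (F x) = F (oproj (W c) x)"
proof (rule oproj_unique[OF W_sub])
  show "F (oproj (W c) x) \<in> W c" using W_F oproj_in[OF W_sub] by blast
  fix w assume w: "w \<in> W c"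
  have "(F x - F (oproj (W c) x)) \<bullet> w = (x - oproj (W c) x) \<bullet> FT w"
    by (simp add: F_adj[symmetric] matrix_vector_mult_diff_distrib)
  also have "\<dots> = 0" using oproj_perp[OF W_sub W_FT[OF w]] .
  finally show "(F x - F (oproj (W c) x)) \<bullet> w = 0" .
qed

end

section \<open>The complex structure on the rotation blocks\<close>

text \<open>For \<open>\<bar>c\<bar> < 2\<close> write \<open>c/2 = cos \<theta>\<close> and \<open>sn c = sin \<theta> > 0\<close>.  Then \<open>F = cos \<theta> + sin \<theta> J\<close>
  on \<open>W c\<close>, where \<open>J\<close> is an isometric complex structure: \<open>W c\<close> is the realification of the
  eigenspace of \<open>F\<close> for \<open>e\<^sup>i\<^sup>\<theta>\<close>.\<close>
context orth_map begin

definition sn :: "real \<Rightarrow> real" where "sn c = sqrt (1 - (c/2)^2)"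

definition J :: "real \<Rightarrow> real^'n \<Rightarrow> real^'n" where
  "J c x = (1 / sn c) *\<^sub>R (F x - (c/2) *\<^sub>R x)"

lemma sn_pos: "\<bar>c\<bar> < 2 \<Longrightarrow> sn c > 0"
proof -
  assume "\<bar>c\<bar> < 2"
  then have "\<bar>c/2\<bar> < 1" by simp
  then have "(c/2)^2 < 1" by (simp only: abs_square_less_1)
  then show ?thesis by (simp add: sn_def)
qed

lemma sn_sq: "\<bar>c\<bar> < 2 \<Longrightarrow> sn c * sn c = 1 - (c/2)^2"
proof -
  assume c: "\<bar>c\<bar> < 2"
  have "0 \<le> 1 - (c/2)^2" using sn_pos[OF c] by (simp add: sn_def)
  then show ?thesis by (simp add: sn_def)
qed

lemma J_lin: "linear (J c)"
  by (rule linearI) (simp_all add: J_def matrix_vector_right_distrib matrix_vector_mult_scaleR algebra_simps)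

lemma sn_J: "\<bar>c\<bar> < 2 \<Longrightarrow> sn c *\<^sub>R J c x = F x - (c/2) *\<^sub>R x"
  using sn_pos[of c] by (simp add: J_def)

lemma F_J: "\<bar>c\<bar> < 2 \<Longrightarrow> F x = (c/2) *\<^sub>R x + sn c *\<^sub>R J c x"
  using sn_J[of c x] by simp

lemma J_W: "x \<in> W c \<Longrightarrow> J c x \<in> W c"
  unfolding J_def using W_sub W_F by (metis subspace_diff subspace_scale)

text \<open>\<open>J\<^sup>2 = -1\<close> on \<open>W c\<close>: this is the relation \<open>F\<^sup>2 - c F + 1 = 0\<close> rewritten in terms of \<open>J\<close>.\<close>
lemma J_J: assumes c: "\<bar>c\<bar> < 2" and x: "x \<in> W c" shows "J c (J c x) = - x"
proof -
  define b where "b = sn c"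
  define a where "a = c/2"
  have e1: "b *\<^sub>R J c x = F x - a *\<^sub>R x" using sn_J[OF c] by (simp add: a_def b_def)
  have e2: "b *\<^sub>R J c (J c x) = F (J c x) - a *\<^sub>R J c x" using sn_J[OF c] by (simp add: a_def b_def)
  have "(b * b) *\<^sub>R J c (J c x) = b *\<^sub>R (F (J c x) - a *\<^sub>R J c x)" using e2 by (metis scaleR_scaleR)
  also have "\<dots> = F (b *\<^sub>R J c x) - a *\<^sub>R (b *\<^sub>R J c x)"
    by (simp add: algebra_simps)
  also have "\<dots> = F (F x) - a *\<^sub>R F x - a *\<^sub>R F x + (a*a) *\<^sub>R x"
    unfolding e1 by (simp add: matrix_vector_mult_diff_distrib matrix_vector_mult_scaleR scaleR_diff_right)
  also have "\<dots> = (c - a - a) *\<^sub>R F x + (a * a - 1) *\<^sub>R x"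
    unfolding W_FF[OF x] by (simp add: vec_eq_iff algebra_simps)
  also have "c - a - a = 0" by (simp add: a_def)
  also have "a * a - 1 = - (b * b)" using sn_sq[OF c] by (simp add: a_def b_def power2_eq_square)
  finally have "(b * b) *\<^sub>R J c (J c x) = (b * b) *\<^sub>R (- x)" by simp
  moreover have "b * b \<noteq> 0" using sn_pos[OF c] by (simp add: b_def)
  ultimately show ?thesis by (metis scaleR_cancel_left)
qed

lemma W_inner_sym: "x \<in> W c \<Longrightarrow> y \<in> W c \<Longrightarrow> F x \<bullet> y + x \<bullet> F y = c * (x \<bullet> y)"
proof -
  assume "x \<in> W c" and y: "y \<in> W c"
  have "F x \<bullet> y + x \<bullet> F y = x \<bullet> (F y + FT y)" by (simp add: F_adj inner_add_right)
  also have "\<dots> = c * (x \<bullet> y)" using y by (simp add: W_def)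
  finally show ?thesis .
qed

lemma J_inner: assumes c: "\<bar>c\<bar> < 2" and x: "x \<in> W c" and y: "y \<in> W c"
  shows "J c x \<bullet> J c y = x \<bullet> y"
proof -
  define b where "b = sn c"
  define a where "a = c/2"
  have "(b*b) * (J c x \<bullet> J c y) = (b *\<^sub>R J c x) \<bullet> (b *\<^sub>R J c y)" by simp
  also have "\<dots> = (F x - a *\<^sub>R x) \<bullet> (F y - a *\<^sub>R y)" using sn_J[OF c] by (simp add: a_def b_def)
  also have "\<dots> = F x \<bullet> F y - a * (F x \<bullet> y + x \<bullet> F y) + a*a * (x \<bullet> y)"
    by (simp add: inner_diff_left inner_diff_right algebra_simps)
  also have "\<dots> = (1 - a*a) * (x \<bullet> y)" using W_inner_sym[OF x y] by (simp add: a_def algebra_simps)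
  also have "1 - a*a = b*b" using sn_sq[OF c] by (simp add: a_def b_def power2_eq_square)
  finally show ?thesis using sn_pos[OF c] by (simp add: b_def)
qed

lemma J_skew: assumes c: "\<bar>c\<bar> < 2" and x: "x \<in> W c" and y: "y \<in> W c"
  shows "J c x \<bullet> y = - (x \<bullet> J c y)"
proof -
  define b where "b = sn c"
  define a where "a = c/2"
  have "b * (J c x \<bullet> y) + b * (x \<bullet> J c y) = (b *\<^sub>R J c x) \<bullet> y + x \<bullet> (b *\<^sub>R J c y)" by simp
  also have "\<dots> = (F x - a *\<^sub>R x) \<bullet> y + x \<bullet> (F y - a *\<^sub>R y)" using sn_J[OF c] by (simp add: a_def b_def)
  also have "\<dots> = (F x \<bullet> y + x \<bullet> F y) - 2 * a * (x \<bullet> y)"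
    by (simp add: inner_diff_left inner_diff_right algebra_simps)
  also have "\<dots> = 0" using W_inner_sym[OF x y] by (simp add: a_def)
  finally have "b * (J c x \<bullet> y + x \<bullet> J c y) = 0" by (simp add: algebra_simps)
  then show ?thesis using sn_pos[OF c] by (simp add: b_def)
qed

lemma J_self: "\<bar>c\<bar> < 2 \<Longrightarrow> x \<in> W c \<Longrightarrow> J c x \<bullet> x = 0"
  using J_skew[of c x x] by (simp add: inner_commute)

lemma no_real_eigenvector: assumes c: "\<bar>c\<bar> < 2" and x: "x \<in> W c" and e: "F x = m *\<^sub>R x"
  shows "x = 0"
proof (rule ccontr)
  assume x0: "x \<noteq> 0"
  have "norm x = \<bar>m\<bar> * norm x" using e F_norm[of x] by simp
  then have "m = 1 \<or> m = -1" using x0 by auto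
  then have "x \<in> W 2 \<or> x \<in> W (-2)" using e by (auto simp: W_2 W_m2)
  moreover have "c \<noteq> 2" "c \<noteq> -2" using c by auto
  ultimately have "x \<bullet> x = 0" using W_orth x by blast
  then show False using x0 by simp
qed

end

section \<open>The commutant of an orthogonal map\<close>

context orth_map begin

definition respects_block :: "(real^'n \<Rightarrow> real^'n) \<Rightarrow> real \<Rightarrow> bool" where
  "respects_block H c \<longleftrightarrow> (\<forall>x\<in>W c. H x \<in> W c \<and> (\<bar>c\<bar> < 2 \<longrightarrow> H (J c x) = J c (H x)))"

lemma comm_FT: assumes "\<And>x. H (F x) = F (H x)" shows "H (FT x) = FT (H x)"
  by (metis FT_F F_FT assms)

lemma comm_W: assumes H: "linear H" and cm: "\<And>x. H (F x) = F (H x)" and x: "x \<in> W c"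
  shows "H x \<in> W c"
proof -
  have "F (H x) + FT (H x) = H (F x + FT x)" using cm comm_FT[of H x] linear_add[OF H] by simp
  also have "\<dots> = c *\<^sub>R H x" using x linear_scale[OF H] by (simp add: W_def)
  finally show ?thesis by (simp add: W_def)
qed

lemma comm_block_J:
  assumes c: "\<bar>c\<bar> < 2" and H: "linear H" and x: "x \<in> W c"
  shows "H (F x) = F (H x) \<longleftrightarrow> H (J c x) = J c (H x)"
proof -
  have "H (F x) = (c/2) *\<^sub>R H x + sn c *\<^sub>R H (J c x)"
    using F_J[OF c, of x] linear_add[OF H] linear_scale[OF H] by simp
  moreover have "F (H x) = (c/2) *\<^sub>R H x + sn c *\<^sub>R J c (H x)" by (rule F_J[OF c])
  ultimately show ?thesis using sn_pos[OF c] by auto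
qed

text \<open>On a real block every map preserving the block commutes with \<open>F = \<plusminus>1\<close>.\<close>
lemma comm_block_real:
  assumes c: "c \<in> spec" "\<not> \<bar>c\<bar> < 2" and x: "x \<in> W c" and H: "linear H" and Hx: "H x \<in> W c"
  shows "H (F x) = F (H x)"
  using real_block[OF c] x Hx linear_neg[OF H] by (auto simp: W_2 W_m2)

text \<open>Since the blocks span the space, commuting with \<open>F\<close> can be checked block by block.\<close>
lemma comm_of_blocks:
  assumes H: "linear H" and bl: "\<And>c x. c \<in> spec \<Longrightarrow> x \<in> W c \<Longrightarrow> H (F x) = F (H x)"
  shows "H (F x) = F (H x)"
proof -
  have dx: "x = (\<Sum>c\<in>spec. oproj (W c) x)" by (rule block_decomposition)
  have "H (F x) = (\<Sum>c\<in>spec. H (F (oproj (W c) x)))"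
    by (subst dx) (simp add: linear_sum[OF H] linear_sum[OF linF] o_def)
  also have "\<dots> = (\<Sum>c\<in>spec. F (H (oproj (W c) x)))"
    using bl oproj_in[OF W_sub] by (intro sum.cong) auto
  also have "\<dots> = F (H x)"
    by (subst (2) dx) (simp add: linear_sum[OF H] linear_sum[OF linF] o_def)
  finally show ?thesis .
qed

lemma commutes_iff_respects_blocks: assumes H: "linear H"
  shows "(\<forall>x. H (F x) = F (H x)) \<longleftrightarrow> (\<forall>c\<in>spec. respects_block H c)"
proof
  assume "\<forall>x. H (F x) = F (H x)"
  then show "\<forall>c\<in>spec. respects_block H c"
    using comm_W[OF H] comm_block_J[OF _ H] J_W unfolding respects_block_def by metis
next
  assume bl: "\<forall>c\<in>spec. respects_block H c"
  have "H (F x) = F (H x)" if c: "c \<in> spec" and x: "x \<in> W c" for c x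
  proof (cases "\<bar>c\<bar> < 2")
    case True
    then show ?thesis using bl c x comm_block_J[OF True H x] by (auto simp: respects_block_def)
  next
    case False
    then show ?thesis using bl c x comm_block_real[OF c False x H] by (auto simp: respects_block_def)
  qed
  then show "\<forall>x. H (F x) = F (H x)" using comm_of_blocks[OF H] by blast
qed

lemma centralizer_iff: assumes "linear h"
  shows "matrix h \<in> centralizer_O f \<longleftrightarrow> orthogonal_transformation h \<and> (\<forall>x. h (F x) = F (h x))"
proof -
  have mh: "\<And>x. matrix h *v x = h x" using assms matrix_vector_mul(2) by metis
  have "orthogonal_matrix (matrix h) \<longleftrightarrow> orthogonal_transformation h"
    using assms by (simp add: orthogonal_transformation_matrix)
  moreover have "matrix h ** f = f ** matrix h \<longleftrightarrow> (\<forall>x. h (F x) = F (h x))"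
    by (simp add: matrix_eq matrix_vector_mul_assoc[symmetric] mh)
  ultimately show ?thesis by (simp add: centralizer_O_def orth_group_def)
qed

end

section \<open>Reflections in the commutant\<close>

text \<open>For \<open>v \<bullet> v = 2\<close>, the map \<open>z \<mapsto> z - (z \<bullet> v) v\<close> is the reflection in the hyperplane \<open>v\<^sup>\<bottom>\<close>.\<close>
definition reflection :: "real^'n \<Rightarrow> real^'n \<Rightarrow> real^'n" where
  "reflection v z = z - (z \<bullet> v) *\<^sub>R v"

lemma reflection_linear: "linear (reflection v)"
  by (rule linearI) (simp_all add: reflection_def inner_add_left algebra_simps)

lemma reflection_orth: assumes "v \<bullet> v = 2" shows "orthogonal_transformation (reflection v)"
proof -
  have "reflection v z \<bullet> reflection v z = z \<bullet> z" for z
    using assms by (simp add: reflection_def inner_diff_left inner_diff_right inner_commute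
        algebra_simps power2_eq_square)
  then have "norm (reflection v z) = norm z" for z by (simp add: norm_eq_sqrt_inner)
  then show ?thesis using reflection_linear by (simp add: orthogonal_transformation)
qed

context orth_map begin

definition creflection :: "real \<Rightarrow> real^'n \<Rightarrow> real^'n \<Rightarrow> real^'n" where
  "creflection c u z = z - ((z \<bullet> u) *\<^sub>R u + (z \<bullet> J c u) *\<^sub>R J c u)"

lemma creflection_linear: "linear (creflection c u)"
  by (rule linearI) (simp_all add: creflection_def inner_add_left algebra_simps)

lemma creflection_orth: assumes c: "\<bar>c\<bar> < 2" and u: "u \<in> W c" and uu: "u \<bullet> u = 2"
  shows "orthogonal_transformation (creflection c u)"
proof -
  have j1: "u \<bullet> J c u = 0" using J_self[OF c u] by (simp add: inner_commute)
  have j2: "J c u \<bullet> J c u = 2" using J_inner[OF c u u] uu by simp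
  have "creflection c u z \<bullet> creflection c u z = z \<bullet> z" for z
    using uu j1 j2 by (simp add: creflection_def inner_diff_left inner_diff_right inner_add_left
        inner_add_right inner_commute algebra_simps power2_eq_square)
  then have "norm (creflection c u z) = norm z" for z by (simp add: norm_eq_sqrt_inner)
  then show ?thesis using creflection_linear by (simp add: orthogonal_transformation)
qed

lemma creflection_comm: assumes c: "\<bar>c\<bar> < 2" and u: "u \<in> W c"
  shows "creflection c u (F z) = F (creflection c u z)"
proof -
  define a where "a = c/2"
  define b where "b = sn c"
  define v where "v = J c u"
  have Fu: "F u = a *\<^sub>R u + b *\<^sub>R v" using F_J[OF c] by (simp add: a_def b_def v_def)
  have vW: "v \<in> W c" using J_W[OF u] by (simp add: v_def)
  have Fv: "F v = a *\<^sub>R v - b *\<^sub>R u"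
    using F_J[OF c, of v] J_J[OF c u] by (simp add: a_def b_def v_def)
  have FTu: "FT u = a *\<^sub>R u - b *\<^sub>R v" using W_FT_eq[OF u] Fu
    by (simp add: a_def vec_eq_iff algebra_simps)
  have FTv: "FT v = a *\<^sub>R v + b *\<^sub>R u" using W_FT_eq[OF vW] Fv
    by (simp add: a_def vec_eq_iff algebra_simps)
  have i1: "F z \<bullet> u = a * (z \<bullet> u) - b * (z \<bullet> v)" by (simp add: F_adj FTu inner_diff_right)
  have i2: "F z \<bullet> v = a * (z \<bullet> v) + b * (z \<bullet> u)" by (simp add: F_adj FTv inner_add_right)
  have "creflection c u (F z) = F z - ((a * (z \<bullet> u) - b * (z \<bullet> v)) *\<^sub>R u + (a * (z \<bullet> v) + b * (z \<bullet> u)) *\<^sub>R v)"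
    by (simp add: creflection_def i1 i2 v_def[symmetric])
  also have "\<dots> = F (creflection c u z)"
    by (simp add: creflection_def v_def[symmetric] matrix_vector_mult_diff_distrib matrix_vector_right_distrib
        matrix_vector_mult_scaleR Fu Fv vec_eq_iff algebra_simps)
  finally show ?thesis .
qed

text \<open>On a real block \<open>F = \<plusminus>1\<close>, so the reflection along any vector of the block commutes with \<open>F\<close>.\<close>
lemma reflection_comm: assumes c: "c = 2 \<or> c = -2" and v: "v \<in> W c"
  shows "reflection v (F z) = F (reflection v z)"
proof -
  have "F v = v \<and> FT v = v \<or> F v = - v \<and> FT v = - v"
    using c v linear_neg[OF linFT, of v] by (auto simp: W_2 W_m2) (metis FT_F minus_minus)+
  then show ?thesis
    by (auto simp: reflection_def F_adj matrix_vector_mult_diff_distrib matrix_vector_mult_scaleR)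
qed

definition block_reflection :: "real \<Rightarrow> real^'n \<Rightarrow> real^'n" where
  "block_reflection c x = x - 2 *\<^sub>R oproj (W c) x"

lemma block_reflection_linear: "linear (block_reflection c)"
  using oproj_linear[OF W_sub, of c]
  by (intro linearI) (simp_all add: block_reflection_def linear_add linear_scale algebra_simps)

lemma block_reflection_orth: "orthogonal_transformation (block_reflection c)"
proof -
  have "oproj (W c) z \<bullet> oproj (W c) z = z \<bullet> oproj (W c) z" for z
    using oproj_inner[OF W_sub oproj_in[OF W_sub]] by simp
  then have "block_reflection c z \<bullet> block_reflection c z = z \<bullet> z" for z
    by (simp add: block_reflection_def inner_diff_left inner_diff_right inner_commute algebra_simps)
  then have "norm (block_reflection c z) = norm z" for z by (simp add: norm_eq_sqrt_inner)
  then show ?thesis using block_reflection_linear by (simp add: orthogonal_transformation)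
qed

lemma block_reflection_comm: "block_reflection c (F x) = F (block_reflection c x)"
  by (simp add: block_reflection_def oproj_F matrix_vector_mult_diff_distrib matrix_vector_mult_scaleR)

lemma commutant_moves_unit_vector:
  assumes c: "c \<in> spec" and x0: "x0 \<in> W c" and y0: "y0 \<in> W c"
    and nx0: "x0 \<bullet> x0 = 1" and ny0: "y0 \<bullet> y0 = 1" and xy: "x0 \<bullet> y0 = 0"
    and xJy: "\<bar>c\<bar> < 2 \<Longrightarrow> x0 \<bullet> J c y0 = 0"
  obtains h where "orthogonal_transformation h" "\<And>z. h (F z) = F (h z)" "h x0 = y0"
proof -
  define w where "w = x0 - y0"
  have wW: "w \<in> W c" using x0 y0 W_sub by (simp add: w_def subspace_diff)
  have ww: "w \<bullet> w = 2" using nx0 ny0 xy by (simp add: w_def inner_diff_left inner_diff_right inner_commute)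
  have a1: "x0 \<bullet> w = 1" using nx0 xy by (simp add: w_def inner_diff_right)
  show thesis
  proof (cases "\<bar>c\<bar> < 2")
    case True
    have "x0 \<bullet> J c w = 0" using J_self[OF True x0] xJy[OF True] linear_diff[OF J_lin]
      by (simp add: w_def inner_diff_right inner_commute)
    then have "creflection c w x0 = y0" using a1 by (simp add: creflection_def w_def)
    then show thesis using that creflection_orth[OF True wW ww] creflection_comm[OF True wW] by blast
  next
    case False
    have "reflection w x0 = y0" using a1 by (simp add: reflection_def w_def)
    then show thesis using that reflection_orth[OF ww] reflection_comm[OF real_block[OF c False] wW] by blast
  qed
qed

lemma nonzero_block_component:
  assumes "u \<noteq> 0" obtains d where "d \<in> spec" "oproj (W d) u \<noteq> 0"
  using block_decomposition[of u] assms by (metis sum.neutral)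

lemma other_block_component:
  assumes d0: "d0 \<in> spec" and x: "x \<notin> W d0"
  obtains d1 where "d1 \<in> spec" "d1 \<noteq> d0" "oproj (W d1) x \<noteq> 0"
proof (rule ccontr)
  assume "\<not> thesis"
  then have "\<forall>d\<in>spec. d \<noteq> d0 \<longrightarrow> oproj (W d) x = 0" using that by blast
  then have "(\<Sum>d\<in>spec. oproj (W d) x) = (\<Sum>d\<in>spec. if d = d0 then oproj (W d0) x else 0)"
    by (intro sum.cong) auto
  also have "\<dots> = oproj (W d0) x" using d0 finite_spec by simp
  finally have "x = oproj (W d0) x" using block_decomposition[of x] by simp
  then show False using x oproj_in[OF W_sub] by metis
qed

end

section \<open>Equal commutants force equal blocks\<close>

definition same_block_data :: "real^'n^'n \<Rightarrow> real^'n^'n \<Rightarrow> bool" where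
  "same_block_data f g \<longleftrightarrow> (\<exists>\<sigma>. bij_betw \<sigma> (orth_map.spec f) (orth_map.spec g) \<and>
     (\<forall>c\<in>orth_map.spec f. dim (orth_map.W f c) = dim (orth_map.W g (\<sigma> c)) \<and> (\<bar>c\<bar> < 2 \<longleftrightarrow> \<bar>\<sigma> c\<bar> < 2)))"

lemma same_block_data_trans:
  assumes "same_block_data f g" "same_block_data g h" shows "same_block_data f h"
proof -
  obtain \<sigma> \<tau> where s: "bij_betw \<sigma> (orth_map.spec f) (orth_map.spec g)"
      "\<forall>c\<in>orth_map.spec f. dim (orth_map.W f c) = dim (orth_map.W g (\<sigma> c)) \<and> (\<bar>c\<bar> < 2 \<longleftrightarrow> \<bar>\<sigma> c\<bar> < 2)"
    and t: "bij_betw \<tau> (orth_map.spec g) (orth_map.spec h)"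
      "\<forall>c\<in>orth_map.spec g. dim (orth_map.W g c) = dim (orth_map.W h (\<tau> c)) \<and> (\<bar>c\<bar> < 2 \<longleftrightarrow> \<bar>\<tau> c\<bar> < 2)"
    using assms unfolding same_block_data_def by blast
  have "bij_betw (\<tau> \<circ> \<sigma>) (orth_map.spec f) (orth_map.spec h)" using s(1) t(1) by (rule bij_betw_trans)
  moreover have "\<forall>c\<in>orth_map.spec f. dim (orth_map.W f c) = dim (orth_map.W h ((\<tau> \<circ> \<sigma>) c))
      \<and> (\<bar>c\<bar> < 2 \<longleftrightarrow> \<bar>(\<tau> \<circ> \<sigma>) c\<bar> < 2)"
    using s t bij_betwE[OF s(1)] by auto
  ultimately show ?thesis unfolding same_block_data_def by blast
qed

locale same_commutant = f: orth_map f + g: orth_map g for f g :: "real^'n^'n" +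
  assumes same: "\<And>h. orthogonal_transformation h \<Longrightarrow>
     (\<forall>x. h (f *v x) = f *v (h x)) \<longleftrightarrow> (\<forall>x. h (g *v x) = g *v (h x))"
begin

text \<open>The block reflections of \<open>g\<close> lie in the common commutant, hence preserve the blocks
  of \<open>f\<close>; so do the projections to the blocks of \<open>g\<close>.\<close>
lemma block_projection_preserves: assumes x: "x \<in> f.W c" shows "oproj (g.W d) x \<in> f.W c"
proof -
  have "\<forall>x. g.block_reflection d (g *v x) = g *v (g.block_reflection d x)" using g.block_reflection_comm by blast
  then have "\<forall>x. g.block_reflection d (f *v x) = f *v (g.block_reflection d x)"
    using same[OF g.block_reflection_orth] by blast
  then have "g.block_reflection d x \<in> f.W c" using f.comm_W[OF g.block_reflection_linear _ x] by blast
  then have "x - g.block_reflection d x \<in> f.W c" using x f.W_sub by (simp add: subspace_diff)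
  moreover have "x - g.block_reflection d x = 2 *\<^sub>R oproj (g.W d) x" by (simp add: g.block_reflection_def)
  ultimately have "(1/2) *\<^sub>R (2 *\<^sub>R oproj (g.W d) x) \<in> f.W c" using f.W_sub by (metis subspace_scale)
  then show ?thesis by simp
qed

text \<open>Likewise \<open>F\<close>, and hence the complex structures of \<open>f\<close>, preserve the blocks of \<open>g\<close>.\<close>
lemma J_preserves_blocks: assumes y: "y \<in> g.W d" shows "f.J c y \<in> g.W d"
proof -
  have "\<forall>x. f *v (g *v x) = g *v (f *v x)" using same[OF f.F_orth] by blast
  then have "f *v y \<in> g.W d" using g.comm_W[OF f.linF _ y] by blast
  then show ?thesis unfolding f.J_def using y g.W_sub by (metis subspace_diff subspace_scale)
qed

text \<open>Each block of \<open>f\<close> lies inside a single block of \<open>g\<close>: otherwise it would contain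
  orthonormal vectors from two different blocks of \<open>g\<close>, exchanged by an element of the
  commutant of \<open>f\<close> --- which, being in the commutant of \<open>g\<close>, preserves the blocks of \<open>g\<close>.\<close>
lemma block_inside_block: assumes c: "c \<in> f.spec" shows "\<exists>d\<in>g.spec. f.W c \<subseteq> g.W d"
proof -
  let ?P = "\<lambda>d. oproj (g.W d)"
  obtain u where u: "u \<in> f.W c" "u \<noteq> 0" using f.W_nonzero[OF c] .
  obtain d0 where d0: "d0 \<in> g.spec" "?P d0 u \<noteq> 0" using g.nonzero_block_component[OF u(2)] .
  have "x \<in> g.W d0" if x: "x \<in> f.W c" for x
  proof (rule ccontr)
    assume "x \<notin> g.W d0"
    then obtain d1 where d1: "d1 \<in> g.spec" "d1 \<noteq> d0" "?P d1 x \<noteq> 0"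
      using g.other_block_component[OF d0(1)] by blast
    define x0 where "x0 = (1 / norm (?P d0 u)) *\<^sub>R ?P d0 u"
    define y0 where "y0 = (1 / norm (?P d1 x)) *\<^sub>R ?P d1 x"
    have x0: "x0 \<in> f.W c" "x0 \<bullet> x0 = 1"
      unfolding x0_def using unit_vector_in[OF f.W_sub block_projection_preserves[OF u(1)] d0(2)] by auto
    have y0: "y0 \<in> f.W c" "y0 \<bullet> y0 = 1"
      unfolding y0_def using unit_vector_in[OF f.W_sub block_projection_preserves[OF x] d1(3)] by auto
    have x0W: "x0 \<in> g.W d0" and y0W: "y0 \<in> g.W d1"
      unfolding x0_def y0_def using oproj_in[OF g.W_sub] g.W_sub by (simp_all add: subspace_scale)
    have "x0 \<bullet> y0 = 0" using g.W_orth[OF x0W y0W] d1(2) by auto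
    moreover have "x0 \<bullet> f.J c y0 = 0" using g.W_orth[OF x0W J_preserves_blocks[OF y0W]] d1(2) by auto
    ultimately obtain h where h: "orthogonal_transformation h" "\<And>z. h (f *v z) = f *v (h z)" "h x0 = y0"
      using f.commutant_moves_unit_vector[OF c x0(1) y0(1) x0(2) y0(2)] by blast
    then have "\<forall>z. h (g *v z) = g *v (h z)" using same by blast
    then have "y0 \<in> g.W d0" using g.comm_W[OF orthogonal_transformation_linear[OF h(1)] _ x0W] h(3) by blast
    then have "y0 \<bullet> y0 = 0" using g.W_orth[OF _ y0W] d1(2) by auto
    then show False using y0(2) by simp
  qed
  then show ?thesis using d0(1) by blast
qed

text \<open>A common block which is real for \<open>f\<close> is real for \<open>g\<close>: a reflection along a vector of
  the block commutes with \<open>f\<close>, hence with \<open>g\<close>, which forces an eigenvector of \<open>g\<close> there.\<close>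
lemma real_block_stays_real: assumes c: "c \<in> f.spec" and eq: "f.W c = g.W d"
  and nc: "\<not> \<bar>c\<bar> < 2" shows "\<not> \<bar>d\<bar> < 2"
proof
  assume dl: "\<bar>d\<bar> < 2"
  obtain x where x: "x \<in> f.W c" "x \<noteq> 0" using f.W_nonzero[OF c] .
  define s where "s = sqrt 2 / norm x"
  define v where "v = s *\<^sub>R x"
  have vW: "v \<in> f.W c" using x f.W_sub by (simp add: v_def subspace_scale)
  have ss: "s * s * (x \<bullet> x) = 2" using x(2) by (simp add: s_def dot_square_norm power2_eq_square)
  have vv: "v \<bullet> v = 2" using ss by (simp add: v_def algebra_simps)
  have "\<forall>z. reflection v (f *v z) = f *v (reflection v z)"
    using f.reflection_comm[OF f.real_block[OF c nc] vW] by blast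
  then have cm: "\<forall>z. reflection v (g *v z) = g *v (reflection v z)" using same[OF reflection_orth[OF vv]] by blast
  have "(x \<bullet> v) *\<^sub>R v = ((s * (x \<bullet> x)) * s) *\<^sub>R x" by (simp add: v_def)
  also have "(s * (x \<bullet> x)) * s = 2" using ss by (simp add: mult.commute mult.left_commute)
  finally have hx: "reflection v x = - x" by (simp add: reflection_def scaleR_2)
  define y where "y = g *v x"
  define k where "k = y \<bullet> v"
  have "reflection v y = g *v (reflection v x)" using cm by (simp add: y_def)
  also have "\<dots> = - y" using hx linear_neg[OF g.linF, of x] by (simp add: y_def)
  finally have "y - k *\<^sub>R v = - y" by (simp add: reflection_def k_def)
  then have "g *v x = (k * s / 2) *\<^sub>R x" by (simp add: y_def v_def vec_eq_iff field_simps)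
  then have "x = 0" using g.no_real_eigenvector[OF dl] x(1) eq by blast
  then show False using x(2) by simp
qed

end

lemma matching_block:
  assumes fg: "same_commutant f g" and gf: "same_commutant g f" and c: "c \<in> orth_map.spec f"
  shows "\<exists>d\<in>orth_map.spec g. orth_map.W g d = orth_map.W f c"
proof -
  interpret fg: same_commutant f g by (rule fg)
  interpret gf: same_commutant g f by (rule gf)
  obtain d where d: "d \<in> fg.g.spec" "fg.f.W c \<subseteq> fg.g.W d" using fg.block_inside_block[OF c] by blast
  obtain c' where c': "fg.g.W d \<subseteq> fg.f.W c'" using gf.block_inside_block[OF d(1)] by blast
  have "c = c'" using fg.f.W_incl_eq[OF c] d(2) c' by blast
  then show ?thesis using d c' by blast
qed

lemma same_commutant_block_data:
  assumes fg: "same_commutant f g" and gf: "same_commutant g f"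
  shows "same_block_data f g"
proof -
  interpret fg: same_commutant f g by (rule fg)
  interpret gf: same_commutant g f by (rule gf)
  define \<sigma> where "\<sigma> c = (SOME d. d \<in> fg.g.spec \<and> fg.g.W d = fg.f.W c)" for c
  have s: "\<sigma> c \<in> fg.g.spec" "fg.g.W (\<sigma> c) = fg.f.W c" if "c \<in> fg.f.spec" for c
    using someI_ex[OF matching_block[OF fg gf that, unfolded Bex_def]] by (auto simp: \<sigma>_def)
  have inj: "inj_on \<sigma> fg.f.spec"
    by (rule inj_onI) (metis s fg.f.W_incl_eq order_refl)
  have surj: "fg.g.spec \<subseteq> \<sigma> ` fg.f.spec"
  proof
    fix d assume d: "d \<in> fg.g.spec"
    obtain c where c: "c \<in> fg.f.spec" "fg.f.W c = fg.g.W d"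
      using matching_block[OF gf fg d] by blast
    have "\<sigma> c = d" using fg.g.W_incl_eq[OF s(1)[OF c(1)]] s(2)[OF c(1)] c(2) by simp
    then show "d \<in> \<sigma> ` fg.f.spec" using c(1) by blast
  qed
  have "\<bar>c\<bar> < 2 \<longleftrightarrow> \<bar>\<sigma> c\<bar> < 2" if c: "c \<in> fg.f.spec" for c
    using fg.real_block_stays_real[OF c s(2)[OF c, symmetric]]
      gf.real_block_stays_real[OF s(1)[OF c] s(2)[OF c]] by blast
  then show ?thesis unfolding same_block_data_def
    using inj surj s by (intro exI[of _ \<sigma>]) (auto simp: bij_betw_def)
qed

lemma same_commutant_of_centralizer:
  fixes f g :: "real^'n^'n"
  assumes f: "orthogonal_matrix f" and g: "orthogonal_matrix g"
    and eq: "centralizer_O f = centralizer_O g"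
  shows "same_commutant f g"
proof -
  interpret f: orth_map f by unfold_locales (rule f)
  interpret g: orth_map g by unfold_locales (rule g)
  show ?thesis
  proof unfold_locales
    fix h :: "real^'n \<Rightarrow> real^'n" assume h: "orthogonal_transformation h"
    have l: "linear h" using h by (rule orthogonal_transformation_linear)
    show "(\<forall>x. h (f *v x) = f *v h x) \<longleftrightarrow> (\<forall>x. h (g *v x) = g *v h x)"
      using f.centralizer_iff[OF l] g.centralizer_iff[OF l] eq h by simp
  qed
qed

lemma equal_centralizers_block_data:
  fixes f g :: "real^'n^'n"
  assumes f: "orthogonal_matrix f" and g: "orthogonal_matrix g"
    and eq: "centralizer_O f = centralizer_O g"
  shows "same_block_data f g"
  using same_commutant_block_data same_commutant_of_centralizer[OF f g eq]
    same_commutant_of_centralizer[OF g f eq[symmetric]] by blast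

section \<open>Isometric complex structures are classified by dimension\<close>

definition complex_structure :: "'a::euclidean_space set \<Rightarrow> ('a \<Rightarrow> 'a) \<Rightarrow> bool" where
  "complex_structure U J \<longleftrightarrow> subspace U \<and> linear J \<and> (\<forall>x\<in>U. J x \<in> U \<and> J (J x) = - x)
     \<and> (\<forall>x\<in>U. \<forall>y\<in>U. J x \<bullet> J y = x \<bullet> y)"

lemma complex_structure_skew: "complex_structure U J \<Longrightarrow> x \<in> U \<Longrightarrow> y \<in> U \<Longrightarrow> J x \<bullet> y = - (x \<bullet> J y)"
proof -
  assume U: "complex_structure U J" and x: "x \<in> U" and y: "y \<in> U"
  have Jx: "J x \<in> U" and inn: "\<forall>a\<in>U. \<forall>b\<in>U. J a \<bullet> J b = a \<bullet> b"
    using U x by (auto simp: complex_structure_def)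
  have "J x \<bullet> y = J (J x) \<bullet> J y" using inn Jx y by simp
  also have "J (J x) = - x" using U x by (simp add: complex_structure_def)
  finally show ?thesis by simp
qed

lemma complex_structure_self: "complex_structure U J \<Longrightarrow> x \<in> U \<Longrightarrow> J x \<bullet> x = 0"
  using complex_structure_skew[of U J x x] by (simp add: inner_commute)

lemma (in orth_map) complex_structure_W: "\<bar>c\<bar> < 2 \<Longrightarrow> complex_structure (W c) (J c)"
  unfolding complex_structure_def using W_sub J_lin J_W J_J J_inner by blast

definition cperp_part :: "('a::euclidean_space \<Rightarrow> 'a) \<Rightarrow> 'a \<Rightarrow> 'a \<Rightarrow> 'a" where
  "cperp_part J e x = x - (x \<bullet> e) *\<^sub>R e - (x \<bullet> J e) *\<^sub>R J e"

definition cperp :: "'a::euclidean_space set \<Rightarrow> ('a \<Rightarrow> 'a) \<Rightarrow> 'a \<Rightarrow> 'a set" where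
  "cperp U J e = {y\<in>U. y \<bullet> e = 0 \<and> y \<bullet> J e = 0}"

lemma inner_orthonormal_sum: assumes "e \<bullet> e = 1" "d \<bullet> d = 1" "e \<bullet> d = 0" "w \<bullet> e = 0" "w \<bullet> d = 0"
  shows "(a *\<^sub>R e + b *\<^sub>R d + w) \<bullet> (a *\<^sub>R e + b *\<^sub>R d + w) = a*a + b*b + w \<bullet> w"
  using assms by (simp add: inner_add_left inner_add_right inner_commute algebra_simps)

text \<open>A complex structure together with a unit vector \<open>e\<close>: splitting off the complex line
  of \<open>e\<close> leaves a complex structure of real dimension two less.\<close>
locale unit_in_complex_structure =
  fixes U :: "'a::euclidean_space set" and J e
  assumes cs: "complex_structure U J" and eU: "e \<in> U" and ee: "e \<bullet> e = 1"
begin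

lemma sU: "subspace U" using cs by (simp add: complex_structure_def)
lemma lJ: "linear J" using cs by (simp add: complex_structure_def)
lemma JU: "x \<in> U \<Longrightarrow> J x \<in> U" using cs by (simp add: complex_structure_def)
lemma JJ: "x \<in> U \<Longrightarrow> J (J x) = - x" using cs by (simp add: complex_structure_def)
lemma Jin: "x \<in> U \<Longrightarrow> y \<in> U \<Longrightarrow> J x \<bullet> J y = x \<bullet> y" using cs by (simp add: complex_structure_def)

lemma Je: "J e \<in> U" "J e \<bullet> J e = 1" "e \<bullet> J e = 0" "J e \<bullet> e = 0"
  using JU[OF eU] Jin[OF eU eU] ee complex_structure_self[OF cs eU] by (auto simp: inner_commute)

lemma cperp_part_in: "x \<in> U \<Longrightarrow> cperp_part J e x \<in> cperp U J e"
  unfolding cperp_def cperp_part_def using eU Je sU ee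
  by (auto simp: inner_diff_left subspace_diff subspace_scale)

lemma cperp_decomp: "x = (x \<bullet> e) *\<^sub>R e + (x \<bullet> J e) *\<^sub>R J e + cperp_part J e x"
  by (simp add: cperp_part_def)

lemma cperp_complex_structure: "complex_structure (cperp U J e) J"
proof -
  have "subspace (cperp U J e)" using sU unfolding cperp_def subspace_def
    by (auto simp: inner_add_left)
  moreover have "J y \<in> cperp U J e" if "y \<in> cperp U J e" for y
  proof -
    have y: "y \<in> U" "y \<bullet> e = 0" "y \<bullet> J e = 0" using that by (auto simp: cperp_def)
    have "J y \<bullet> e = - (y \<bullet> J e)" using complex_structure_skew[OF cs y(1) eU] .
    moreover have "J y \<bullet> J e = y \<bullet> e" using Jin[OF y(1) eU] .
    ultimately show ?thesis using y JU by (simp add: cperp_def)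
  qed
  ultimately show ?thesis using cs unfolding complex_structure_def cperp_def by auto
qed

lemma cperp_dim: "dim (cperp U J e) + 2 = dim U"
proof -
  let ?A = "span {e, J e}"
  have A: "subspace ?A" "?A \<subseteq> U" using sU eU Je(1) by (auto simp: span_minimal)
  have eq: "{y \<in> U. \<forall>x\<in>?A. orthogonal x y} = cperp U J e"
  proof safe
    fix y assume "y \<in> U" "\<forall>x\<in>?A. orthogonal x y"
    then show "y \<in> cperp U J e" by (auto simp: cperp_def orthogonal_def span_base inner_commute)
  next
    fix y assume "y \<in> cperp U J e" then show "y \<in> U" by (simp add: cperp_def)
  next
    fix y x assume y: "y \<in> cperp U J e" and x: "x \<in> ?A"
    have "orthogonal y x" using x
      by (rule orthogonal_to_span) (use y in \<open>auto simp: cperp_def orthogonal_def inner_commute\<close>)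
    then show "orthogonal x y" by (simp add: orthogonal_commute)
  qed
  have "e \<noteq> J e" using ee Je by auto
  moreover have "independent {e, J e}"
    using ee Je by (intro pairwise_orthogonal_independent) (auto simp: pairwise_def orthogonal_def inner_commute)
  ultimately have "dim ?A = 2" by (simp add: dim_span dim_eq_card_independent)
  then show ?thesis using dim_subspace_orthogonal_to_vectors[OF A(1) sU A(2)] eq by simp
qed

lemma cperp_part_J: "x \<in> U \<Longrightarrow> cperp_part J e (J x) = J (cperp_part J e x)"
proof -
  assume x: "x \<in> U"
  have a: "J x \<bullet> e = - (x \<bullet> J e)" using complex_structure_skew[OF cs x eU] .
  have b: "J x \<bullet> J e = x \<bullet> e" using Jin[OF x eU] .
  have "J (cperp_part J e x) = J x - (x \<bullet> e) *\<^sub>R J e - (x \<bullet> J e) *\<^sub>R J (J e)"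
    unfolding cperp_part_def by (simp add: linear_diff[OF lJ] linear_scale[OF lJ])
  also have "\<dots> = J x - (x \<bullet> e) *\<^sub>R J e + (x \<bullet> J e) *\<^sub>R e" using JJ[OF eU] by simp
  also have "\<dots> = cperp_part J e (J x)" unfolding cperp_part_def a b by simp
  finally show ?thesis by simp
qed

end

definition complex_isometry :: "('a::euclidean_space \<Rightarrow> 'a) \<Rightarrow> 'a set \<Rightarrow> ('a \<Rightarrow> 'a) \<Rightarrow> 'a set \<Rightarrow> ('a \<Rightarrow> 'a) \<Rightarrow> bool" where
  "complex_isometry K U1 J1 U2 J2 \<longleftrightarrow> linear K \<and> K ` U1 = U2 \<and> (\<forall>x\<in>U1. norm (K x) = norm x)
     \<and> (\<forall>x\<in>U1. K (J1 x) = J2 (K x))"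

text \<open>Induction step: a complex isometry \<open>K'\<close> between the complements of two unit vectors
  \<open>e1, e2\<close> extends to a complex isometry mapping \<open>e1 \<mapsto> e2\<close>.\<close>
locale complex_isometry_extension =
  u1: unit_in_complex_structure U1 J1 e1 + u2: unit_in_complex_structure U2 J2 e2
  for U1 U2 :: "'a::euclidean_space set" and J1 J2 e1 e2 +
  fixes K' :: "'a \<Rightarrow> 'a"
  assumes K': "complex_isometry K' (cperp U1 J1 e1) J1 (cperp U2 J2 e2) J2"
begin

definition K :: "'a \<Rightarrow> 'a" where
  "K x = (x \<bullet> e1) *\<^sub>R e2 + (x \<bullet> J1 e1) *\<^sub>R J2 e2 + K' (cperp_part J1 e1 x)"

lemma linK': "linear K'" using K' by (simp add: complex_isometry_def)

lemma K'_in: "x \<in> U1 \<Longrightarrow> K' (cperp_part J1 e1 x) \<in> cperp U2 J2 e2"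
  using K' u1.cperp_part_in unfolding complex_isometry_def by blast

lemma linK: "linear K"
  by (rule linearI) (simp_all add: K_def cperp_part_def linear_add[OF linK'] linear_scale[OF linK']
      linear_diff[OF linK'] inner_add_left algebra_simps)

text \<open>\<open>K\<close> maps \<open>U1\<close> onto \<open>U2\<close>: surjectivity uses the decomposition of \<open>U2\<close> along \<open>e2\<close>.\<close>
lemma K_into: "K ` U1 \<subseteq> U2"
proof
  fix y assume "y \<in> K ` U1"
  then obtain x where x: "x \<in> U1" "y = K x" by blast
  have "K' (cperp_part J1 e1 x) \<in> U2" using K'_in[OF x(1)] by (simp add: cperp_def)
  then show "y \<in> U2" using x u2.eU u2.Je u2.sU by (simp add: K_def subspace_add subspace_scale)
qed

lemma K_onto: "U2 \<subseteq> K ` U1"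
proof
  fix y assume y: "y \<in> U2"
  obtain z where z: "z \<in> cperp U1 J1 e1" "K' z = cperp_part J2 e2 y"
    using K' u2.cperp_part_in[OF y] unfolding complex_isometry_def by (metis imageE)
  have zz: "z \<in> U1" "z \<bullet> e1 = 0" "z \<bullet> J1 e1 = 0" using z(1) by (auto simp: cperp_def)
  define x where "x = (y \<bullet> e2) *\<^sub>R e1 + (y \<bullet> J2 e2) *\<^sub>R J1 e1 + z"
  have xU: "x \<in> U1" using zz u1.eU u1.Je u1.sU by (simp add: x_def subspace_add subspace_scale)
  have a: "x \<bullet> e1 = y \<bullet> e2" "x \<bullet> J1 e1 = y \<bullet> J2 e2"
    using zz u1.ee u1.Je by (auto simp: x_def inner_add_left)
  have "cperp_part J1 e1 x = z" using a by (simp add: cperp_part_def x_def)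
  then have "K x = y" using a z(2) u2.cperp_decomp[of y] by (simp add: K_def)
  then show "y \<in> K ` U1" using xU by blast
qed

text \<open>\<open>K\<close> is isometric (Pythagoras on both sides) and intertwines the complex structures.\<close>
lemma K_norm: assumes x: "x \<in> U1" shows "norm (K x) = norm x"
proof -
  let ?r = "cperp_part J1 e1 x"
  have r2: "K' ?r \<bullet> e2 = 0" "K' ?r \<bullet> J2 e2 = 0" using K'_in[OF x] by (auto simp: cperp_def)
  have r1: "?r \<bullet> e1 = 0" "?r \<bullet> J1 e1 = 0" using u1.cperp_part_in[OF x] by (auto simp: cperp_def)
  have nK': "K' ?r \<bullet> K' ?r = ?r \<bullet> ?r"
    using K' u1.cperp_part_in[OF x] by (simp add: complex_isometry_def dot_square_norm)
  have "K x \<bullet> K x = (x \<bullet> e1) * (x \<bullet> e1) + (x \<bullet> J1 e1) * (x \<bullet> J1 e1) + ?r \<bullet> ?r"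
    unfolding K_def using inner_orthonormal_sum[OF u2.ee u2.Je(2) u2.Je(3) r2] nK' by simp
  also have "\<dots> = x \<bullet> x"
    using inner_orthonormal_sum[OF u1.ee u1.Je(2) u1.Je(3) r1, of "x \<bullet> e1" "x \<bullet> J1 e1"] u1.cperp_decomp[of x] by simp
  finally show ?thesis by (simp add: norm_eq_sqrt_inner)
qed

lemma K_J: assumes x: "x \<in> U1" shows "K (J1 x) = J2 (K x)"
proof -
  have a: "J1 x \<bullet> e1 = - (x \<bullet> J1 e1)" using complex_structure_skew[OF u1.cs x u1.eU] .
  have b: "J1 x \<bullet> J1 e1 = x \<bullet> e1" using u1.Jin[OF x u1.eU] .
  have "K (J1 x) = - (x \<bullet> J1 e1) *\<^sub>R e2 + (x \<bullet> e1) *\<^sub>R J2 e2 + J2 (K' (cperp_part J1 e1 x))"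
    using K' u1.cperp_part_in[OF x] by (simp add: complex_isometry_def K_def a b u1.cperp_part_J[OF x])
  also have "\<dots> = J2 (K x)"
    using u2.JJ[OF u2.eU] by (simp add: K_def linear_add[OF u2.lJ] linear_scale[OF u2.lJ] algebra_simps)
  finally show ?thesis .
qed

lemma K_complex_isometry: "complex_isometry K U1 J1 U2 J2"
  unfolding complex_isometry_def using linK K_into K_onto K_norm K_J by blast

end

text \<open>Two isometric complex structures of the same dimension are isomorphic
  (induction on the dimension, splitting off one complex line at a time).\<close>
lemma complex_structures_isometric:
  fixes J1 J2 :: "'a::euclidean_space \<Rightarrow> 'a"
  assumes "complex_structure U1 J1" "complex_structure U2 J2" "dim U1 = dim U2"
  shows "\<exists>K. complex_isometry K U1 J1 U2 J2"
  using assms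
proof (induction "dim U1" arbitrary: U1 U2 rule: less_induct)
  case less
  have s1: "subspace U1" and s2: "subspace U2" using less.prems by (auto simp: complex_structure_def)
  show ?case
  proof (cases "dim U1 = 0")
    case True
    then have "U1 \<subseteq> {0}" "U2 \<subseteq> {0}" using less.prems(3) dim_eq_0 by metis+
    then have "U1 = {0}" "U2 = {0}" using s1 s2 subspace_0 by auto
    then show ?thesis using less.prems
      by (intro exI[of _ "\<lambda>x. 0"]) (auto simp: complex_structure_def complex_isometry_def intro: linear_zero)
  next
    case False
    obtain e1' where e1': "e1' \<in> U1" "e1' \<noteq> 0" using False dim_eq_0 by (metis subsetI singletonI)
    obtain e2' where e2': "e2' \<in> U2" "e2' \<noteq> 0" using False less.prems(3) dim_eq_0 by (metis subsetI singletonI)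
    define e1 where "e1 = (1 / norm e1') *\<^sub>R e1'"
    define e2 where "e2 = (1 / norm e2') *\<^sub>R e2'"
    interpret u1: unit_in_complex_structure U1 J1 e1
      using less.prems(1) unit_vector_in[OF s1 e1'] by unfold_locales (auto simp: e1_def)
    interpret u2: unit_in_complex_structure U2 J2 e2
      using less.prems(2) unit_vector_in[OF s2 e2'] by unfold_locales (auto simp: e2_def)
    have "dim (cperp U1 J1 e1) < dim U1" "dim (cperp U1 J1 e1) = dim (cperp U2 J2 e2)"
      using u1.cperp_dim u2.cperp_dim less.prems(3) by auto
    then obtain K' where "complex_isometry K' (cperp U1 J1 e1) J1 (cperp U2 J2 e2) J2"
      using less.hyps u1.cperp_complex_structure u2.cperp_complex_structure by blast
    then interpret ext: complex_isometry_extension U1 U2 J1 J2 e1 e2 K'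
      by unfold_locales
    show ?thesis using ext.K_complex_isometry by blast
  qed
qed

section \<open>Equal block data gives conjugate commutants\<close>

lemma matrix_inv_orth: fixes k :: "real^'n^'n" assumes "orthogonal_matrix k"
  shows "matrix_inv k = transpose k"
proof -
  have k: "transpose k ** k = mat 1" "k ** transpose k = mat 1" using assms by (auto simp: orthogonal_matrix_def)
  have "A = transpose k" if "k ** A = mat 1 \<and> A ** k = mat 1" for A :: "real^'n^'n"
  proof -
    have "A = A ** (k ** transpose k)" using k by simp
    also have "\<dots> = (A ** k) ** transpose k" by (simp add: matrix_mul_assoc)
    also have "\<dots> = transpose k" using that by simp
    finally show ?thesis .
  qed
  moreover have "k ** transpose k = mat 1 \<and> transpose k ** k = mat 1" using k by simp
  ultimately show ?thesis unfolding matrix_inv_def by (metis (mono_tags, lifting) someI_ex)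
qed

lemma centralizer_O_iff:
  "h \<in> centralizer_O u \<longleftrightarrow> orthogonal_matrix h \<and> (\<forall>x. h *v (u *v x) = u *v (h *v x))"
  by (simp add: centralizer_O_def orth_group_def matrix_eq matrix_vector_mul_assoc)

locale block_matching = f: orth_map f + g: orth_map g for f g :: "real^'n^'n" +
  fixes \<sigma> :: "real \<Rightarrow> real"
  assumes bij: "bij_betw \<sigma> f.spec g.spec"
    and dims: "\<And>c. c \<in> f.spec \<Longrightarrow> dim (f.W c) = dim (g.W (\<sigma> c))"
    and types: "\<And>c. c \<in> f.spec \<Longrightarrow> \<bar>c\<bar> < 2 \<longleftrightarrow> \<bar>\<sigma> c\<bar> < 2"
begin

definition block_iso :: "real \<Rightarrow> (real^'n \<Rightarrow> real^'n) \<Rightarrow> bool" where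
  "block_iso c K \<longleftrightarrow> linear K \<and> K ` f.W c = g.W (\<sigma> c) \<and> (\<forall>x\<in>f.W c. norm (K x) = norm x)
     \<and> (\<bar>c\<bar> < 2 \<longrightarrow> (\<forall>x\<in>f.W c. K (f.J c x) = g.J (\<sigma> c) (K x)))"

text \<open>Such isometries exist: on rotation blocks by the classification of complex structures,
  on real blocks since the dimensions agree.\<close>
lemma block_iso_exists: assumes c: "c \<in> f.spec" shows "\<exists>K. block_iso c K"
proof (cases "\<bar>c\<bar> < 2")
  case True
  then have "\<bar>\<sigma> c\<bar> < 2" using types[OF c] by simp
  then obtain K where "complex_isometry K (f.W c) (f.J c) (g.W (\<sigma> c)) (g.J (\<sigma> c))"
    using complex_structures_isometric f.complex_structure_W[OF True] g.complex_structure_W dims[OF c] by blast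
  then show ?thesis unfolding block_iso_def complex_isometry_def by blast
next
  case False
  obtain K where "linear K" "K ` f.W c = g.W (\<sigma> c)" "\<And>x. x \<in> f.W c \<Longrightarrow> norm (K x) = norm x"
    using isometries_subspaces[OF f.W_sub g.W_sub dims[OF c]] by metis
  then show ?thesis using False unfolding block_iso_def by blast
qed

definition iso_on :: "real \<Rightarrow> real^'n \<Rightarrow> real^'n" where "iso_on c = (SOME K. block_iso c K)"

lemma iso_on: "c \<in> f.spec \<Longrightarrow> block_iso c (iso_on c)"
  unfolding iso_on_def using block_iso_exists someI_ex by metis

definition K :: "real^'n \<Rightarrow> real^'n" where
  "K x = (\<Sum>c\<in>f.spec. iso_on c (oproj (f.W c) x))"

lemma K_linear: "linear K"
proof -
  have "linear (\<lambda>x. iso_on c (oproj (f.W c) x))" if "c \<in> f.spec" for c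
    using iso_on[OF that] oproj_linear[OF f.W_sub] unfolding block_iso_def
    by (simp add: linear_compose[unfolded o_def])
  then show ?thesis unfolding K_def by (intro linear_compose_sum) auto
qed

lemma K_block: assumes c: "c \<in> f.spec" and x: "x \<in> f.W c" shows "K x = iso_on c x"
proof -
  have "K x = (\<Sum>c'\<in>f.spec. if c' = c then iso_on c x else 0)"
    unfolding K_def
  proof (rule sum.cong[OF refl])
    fix c' assume c': "c' \<in> f.spec"
    show "iso_on c' (oproj (f.W c') x) = (if c' = c then iso_on c x else 0)"
    proof (cases "c' = c")
      case True then show ?thesis using x by (simp add: oproj_id f.W_sub)
    next
      case False
      then have "oproj (f.W c') x = 0" using f.W_orth[OF x] by (intro oproj_zero[OF f.W_sub]) auto
      then show ?thesis using False iso_on[OF c'] by (simp add: block_iso_def linear_0)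
    qed
  qed
  also have "\<dots> = iso_on c x" using c f.finite_spec by simp
  finally show ?thesis .
qed

text \<open>\<open>K\<close> is isometric by Pythagoras, as it maps the orthogonal blocks of \<open>f\<close> isometrically
  onto the orthogonal blocks of \<open>g\<close>.\<close>
lemma K_norm: "norm (K x) = norm x"
proof -
  let ?p = "\<lambda>c. oproj (f.W c) x"
  have inW: "iso_on c (?p c) \<in> g.W (\<sigma> c)" if "c \<in> f.spec" for c
    using iso_on[OF that] oproj_in[OF f.W_sub] unfolding block_iso_def by blast
  have "(norm (K x))^2 = (\<Sum>c\<in>f.spec. (norm (iso_on c (?p c)))^2)"
    unfolding K_def
  proof (rule norm_sum_Pythagorean[OF f.finite_spec])
    show "pairwise (\<lambda>i j. orthogonal (iso_on i (?p i)) (iso_on j (?p j))) f.spec"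
      unfolding pairwise_def orthogonal_def
    proof (intro ballI impI)
      fix i j assume ij: "i \<in> f.spec" "j \<in> f.spec" "i \<noteq> j"
      then have "\<sigma> i \<noteq> \<sigma> j" using bij by (auto simp: bij_betw_def inj_on_def)
      then show "iso_on i (?p i) \<bullet> iso_on j (?p j) = 0" using g.W_orth[OF inW[OF ij(1)] inW[OF ij(2)]] by blast
    qed
  qed
  also have "\<dots> = (\<Sum>c\<in>f.spec. (norm (?p c))^2)"
    using iso_on oproj_in[OF f.W_sub] unfolding block_iso_def by (intro sum.cong) auto
  also have "\<dots> = (norm (\<Sum>c\<in>f.spec. ?p c))^2"
  proof (rule norm_sum_Pythagorean[OF f.finite_spec, symmetric])
    show "pairwise (\<lambda>i j. orthogonal (?p i) (?p j)) f.spec"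
      unfolding pairwise_def orthogonal_def using f.W_orth oproj_in[OF f.W_sub] by blast
  qed
  also have "(\<Sum>c\<in>f.spec. ?p c) = x" using f.block_decomposition[of x] by simp
  finally show ?thesis by (simp add: power2_eq_iff_nonneg)
qed

definition k :: "real^'n^'n" where "k = matrix K"

lemma K_orth: "orthogonal_transformation K"
  using K_linear K_norm by (simp add: orthogonal_transformation)

lemma k_orth: "orthogonal_matrix k"
  using K_orth K_linear by (simp add: k_def orthogonal_transformation_matrix)

lemma k_apply: "k *v x = K x"
  using K_linear by (simp add: k_def)

lemma kT_k: "transpose k *v (k *v x) = x"
  using k_orth unfolding orthogonal_matrix_def by (metis matrix_vector_mul_assoc matrix_vector_mul_lid)

lemma K_inj: "K a = K b \<Longrightarrow> a = b"
  using kT_k by (metis k_apply)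

lemma K_image: "c \<in> f.spec \<Longrightarrow> K ` f.W c = g.W (\<sigma> c)"
  using iso_on K_block unfolding block_iso_def by (metis (no_types, lifting) image_cong)

lemma K_J: "c \<in> f.spec \<Longrightarrow> \<bar>c\<bar> < 2 \<Longrightarrow> x \<in> f.W c \<Longrightarrow> K (f.J c x) = g.J (\<sigma> c) (K x)"
  using iso_on K_block f.J_W unfolding block_iso_def by metis

lemma respects_block_conj:
  fixes h :: "real^'n^'n"
  assumes c: "c \<in> f.spec"
  defines "H \<equiv> (\<lambda>x. h *v x)" and "H' \<equiv> (\<lambda>y. k *v (h *v (transpose k *v y)))"
  shows "f.respects_block H c \<longleftrightarrow> g.respects_block H' (\<sigma> c)"
proof -
  have H'K: "H' (K x) = K (H x)" for x by (simp add: H'_def H_def k_apply[symmetric] kT_k)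
  have injK: "inj K" using K_inj by (rule injI)
  have pres: "(\<forall>x\<in>f.W c. H x \<in> f.W c) \<longleftrightarrow> (\<forall>y\<in>g.W (\<sigma> c). H' y \<in> g.W (\<sigma> c))"
    unfolding K_image[OF c, symmetric] by (auto simp: H'K inj_image_mem_iff[OF injK])
  have J: "(\<forall>x\<in>f.W c. H (f.J c x) = f.J c (H x)) \<longleftrightarrow> (\<forall>y\<in>g.W (\<sigma> c). H' (g.J (\<sigma> c) y) = g.J (\<sigma> c) (H' y))"
    if cc: "\<bar>c\<bar> < 2" and inv: "\<forall>x\<in>f.W c. H x \<in> f.W c"
  proof -
    have "H (f.J c x) = f.J c (H x) \<longleftrightarrow> H' (g.J (\<sigma> c) (K x)) = g.J (\<sigma> c) (H' (K x))"
      if x: "x \<in> f.W c" for x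
      using K_J[OF c cc x] K_J[OF c cc inv[rule_format, OF x]] H'K inj_eq[OF injK] by metis
    then show ?thesis unfolding K_image[OF c, symmetric] by auto
  qed
  show ?thesis
    unfolding f.respects_block_def g.respects_block_def using pres J types[OF c] by blast
qed

lemma conj_comm:
  fixes h :: "real^'n^'n"
  shows "(\<forall>x. h *v (f *v x) = f *v (h *v x)) \<longleftrightarrow>
         (\<forall>y. (k ** h ** transpose k) *v (g *v y) = g *v ((k ** h ** transpose k) *v y))"
proof -
  let ?H' = "\<lambda>y. k *v (h *v (transpose k *v y))"
  have e: "(\<lambda>y. (k ** h ** transpose k) *v y) = ?H'" by (simp add: matrix_vector_mul_assoc[symmetric])
  have "(\<forall>x. h *v (f *v x) = f *v (h *v x)) \<longleftrightarrow> (\<forall>c\<in>f.spec. f.respects_block ((*v) h) c)"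
    using f.commutes_iff_respects_blocks[of "(*v) h"] by simp
  also have "\<dots> \<longleftrightarrow> (\<forall>c\<in>f.spec. g.respects_block ?H' (\<sigma> c))" using respects_block_conj by blast
  also have "\<dots> \<longleftrightarrow> (\<forall>d\<in>\<sigma> ` f.spec. g.respects_block ?H' d)" by auto
  also have "\<sigma> ` f.spec = g.spec" using bij by (simp add: bij_betw_def)
  also have "(\<forall>d\<in>g.spec. g.respects_block ?H' d) \<longleftrightarrow> (\<forall>y. ?H' (g *v y) = g *v (?H' y))"
    using g.commutes_iff_respects_blocks[of ?H'] matrix_vector_mul_linear e by metis
  finally show ?thesis by (simp add: matrix_vector_mul_assoc[symmetric])
qed

lemma conj_centralizer: "(\<lambda>h. k ** h ** matrix_inv k) ` centralizer_O f = centralizer_O g"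
proof -
  have kk: "k ** transpose k = mat 1" "transpose k ** k = mat 1" using k_orth by (auto simp: orthogonal_matrix_def)
  show ?thesis unfolding matrix_inv_orth[OF k_orth]
  proof safe
    fix h assume "h \<in> centralizer_O f"
    then show "k ** h ** transpose k \<in> centralizer_O g"
      using conj_comm[of h] k_orth by (simp add: centralizer_O_iff orthogonal_matrix_mul)
  next
    fix h' assume h': "h' \<in> centralizer_O g"
    define h where "h = transpose k ** h' ** k"
    have hback: "k ** h ** transpose k = h'" unfolding h_def
      by (simp add: matrix_mul_assoc kk) (simp add: matrix_mul_assoc[symmetric] kk)
    have "orthogonal_matrix h"
      using h' k_orth unfolding h_def by (simp add: centralizer_O_iff orthogonal_matrix_mul)
    then have "h \<in> centralizer_O f"
      using conj_comm[of h] h' unfolding hback by (simp add: centralizer_O_iff)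
    then show "h' \<in> (\<lambda>h. k ** h ** transpose k) ` centralizer_O f" using hback by force
  qed
qed

end

lemma block_data_conj_centralizers:
  fixes f g :: "real^'n^'n"
  assumes f: "orthogonal_matrix f" and g: "orthogonal_matrix g" and b: "same_block_data f g"
  shows "\<exists>k. orthogonal_matrix k \<and> (\<lambda>h. k ** h ** matrix_inv k) ` centralizer_O f = centralizer_O g"
proof -
  obtain \<sigma> where s: "bij_betw \<sigma> (orth_map.spec f) (orth_map.spec g)"
    "\<forall>c\<in>orth_map.spec f. dim (orth_map.W f c) = dim (orth_map.W g (\<sigma> c)) \<and> (\<bar>c\<bar> < 2 \<longleftrightarrow> \<bar>\<sigma> c\<bar> < 2)"
    using b unfolding same_block_data_def by blast
  interpret m: block_matching f g \<sigma>
    by unfold_locales (use f g s in auto)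
  show ?thesis using m.k_orth m.conj_centralizer by blast
qed

section \<open>Conjugate commutants give equal block data\<close>

lemma conj_W:
  fixes k f :: "real^'n^'n"
  assumes k: "orthogonal_matrix k" and f: "orthogonal_matrix f"
  shows "orth_map.W (k ** f ** transpose k) c = (\<lambda>x. k *v x) ` orth_map.W f c"
proof -
  let ?f' = "k ** f ** transpose k"
  have kk: "\<And>x. transpose k *v (k *v x) = x" "\<And>x. k *v (transpose k *v x) = x"
    using k unfolding orthogonal_matrix_def by (metis matrix_vector_mul_assoc matrix_vector_mul_lid)+
  have kinj: "k *v a = k *v b \<longleftrightarrow> a = b" for a b using kk(1) by metis
  interpret f: orth_map f by unfold_locales (rule f)
  interpret f': orth_map ?f' by unfold_locales (use k f in \<open>simp add: orthogonal_matrix_mul\<close>)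
  have e1: "?f' *v x = k *v (f *v (transpose k *v x))" for x by (simp add: matrix_vector_mul_assoc[symmetric])
  have e2: "transpose ?f' *v x = k *v (transpose f *v (transpose k *v x))" for x
    by (simp add: matrix_transpose_mul matrix_mul_assoc matrix_vector_mul_assoc[symmetric])
  have iff: "x \<in> f'.W c \<longleftrightarrow> transpose k *v x \<in> f.W c" for x
  proof -
    have "x \<in> f'.W c \<longleftrightarrow> k *v (f *v (transpose k *v x) + transpose f *v (transpose k *v x))
        = k *v (c *\<^sub>R (transpose k *v x))"
      by (simp add: f'.W_def e1 e2 matrix_vector_right_distrib matrix_vector_mult_scaleR kk)
    also have "\<dots> \<longleftrightarrow> f *v (transpose k *v x) + transpose f *v (transpose k *v x) = c *\<^sub>R (transpose k *v x)"
      using kinj by blast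
    finally show ?thesis by (simp add: f.W_def)
  qed
  show ?thesis
  proof (rule set_eqI)
    fix x
    show "x \<in> f'.W c \<longleftrightarrow> x \<in> (\<lambda>x. k *v x) ` f.W c"
    proof
      assume "x \<in> f'.W c"
      then show "x \<in> (\<lambda>x. k *v x) ` f.W c" using iff kk(2) by (metis image_eqI)
    next
      assume "x \<in> (\<lambda>x. k *v x) ` f.W c"
      then show "x \<in> f'.W c" using iff kk(1) by auto
    qed
  qed
qed

lemma conj_same_block_data:
  fixes k f :: "real^'n^'n"
  assumes k: "orthogonal_matrix k" and f: "orthogonal_matrix f"
  shows "same_block_data f (k ** f ** transpose k)"
proof -
  interpret f: orth_map f by unfold_locales (rule f)
  have inj: "inj ((*v) k)"
    using k unfolding orthogonal_matrix_def by (metis inj_on_inverseI matrix_vector_mul_assoc matrix_vector_mul_lid)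
  have dimeq: "dim ((\<lambda>x. k *v x) ` S) = dim S" for S
    using dim_image_eq[OF matrix_vector_mul_linear, of k S] inj by (simp add: inj_on_def inj_def)
  interpret f': orth_map "k ** f ** transpose k" by unfold_locales (use k f in \<open>simp add: orthogonal_matrix_mul\<close>)
  have "(\<lambda>x. k *v x) ` f.W c = {0} \<longleftrightarrow> f.W c = {0}" for c
  proof
    assume a: "(\<lambda>x. k *v x) ` f.W c = {0}"
    have "y = 0" if "y \<in> f.W c" for y
    proof -
      have "k *v y = k *v 0" using a that by auto
      then show ?thesis using inj by (simp add: inj_def)
    qed
    then show "f.W c = {0}" using f.W_sub subspace_0 by blast
  qed simp
  then have "f'.spec = f.spec" by (simp add: f.spec_def f'.spec_def conj_W[OF k f])
  then show ?thesis unfolding same_block_data_def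
    by (intro exI[of _ id]) (simp add: conj_W[OF k f] dimeq)
qed

lemma conj_centralizer_O:
  fixes k f :: "real^'n^'n"
  assumes k: "orthogonal_matrix k"
  shows "centralizer_O (k ** f ** transpose k) = (\<lambda>h. k ** h ** transpose k) ` centralizer_O f"
proof -
  have kk: "transpose k ** k = mat 1" "k ** transpose k = mat 1" using k by (auto simp: orthogonal_matrix_def)
  have unconj: "transpose k ** (k ** A ** transpose k) ** k = A" for A :: "real^'n^'n"
    by (simp add: matrix_mul_assoc kk) (simp add: matrix_mul_assoc[symmetric] kk)
  have reconj: "k ** (transpose k ** A ** k) ** transpose k = A" for A :: "real^'n^'n"
    by (simp add: matrix_mul_assoc kk) (simp add: matrix_mul_assoc[symmetric] kk)
  have mult: "(k ** A ** transpose k) ** (k ** B ** transpose k) = k ** (A ** B) ** transpose k"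
    for A B :: "real^'n^'n"
    by (simp add: matrix_mul_assoc) (simp add: matrix_mul_assoc[symmetric] kk)
  have key: "(k ** h ** transpose k) ** (k ** f ** transpose k) = (k ** f ** transpose k) ** (k ** h ** transpose k)
     \<longleftrightarrow> h ** f = f ** h" for h
  proof
    assume "(k ** h ** transpose k) ** (k ** f ** transpose k) = (k ** f ** transpose k) ** (k ** h ** transpose k)"
    then have "transpose k ** (k ** (h ** f) ** transpose k) ** k = transpose k ** (k ** (f ** h) ** transpose k) ** k"
      unfolding mult by simp
    then show "h ** f = f ** h" unfolding unconj .
  qed (simp add: mult)
  show ?thesis
  proof safe
    fix h' assume h': "h' \<in> centralizer_O (k ** f ** transpose k)"
    define h where "h = transpose k ** h' ** k"
    have hb: "k ** h ** transpose k = h'" unfolding h_def by (rule reconj)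
    have "h \<in> centralizer_O f"
      using h' k key[of h] unfolding hb by (simp add: h_def centralizer_O_def orth_group_def orthogonal_matrix_mul)
    then show "h' \<in> (\<lambda>h. k ** h ** transpose k) ` centralizer_O f" using hb by force
  next
    fix h assume "h \<in> centralizer_O f"
    then show "k ** h ** transpose k \<in> centralizer_O (k ** f ** transpose k)"
      using key[of h] k by (simp add: centralizer_O_def orth_group_def orthogonal_matrix_mul)
  qed
qed

text \<open>Conjugate centralizers imply equal block data: the conjugate \<open>k f k\<^sup>T\<close> has the
  centralizer of \<open>g\<close>, hence the block data of \<open>g\<close>, and it has the block data of \<open>f\<close>.\<close>
lemma conj_centralizers_block_data:
  fixes k f g :: "real^'n^'n"
  assumes f: "orthogonal_matrix f" and g: "orthogonal_matrix g" and k: "orthogonal_matrix k"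
    and eq: "(\<lambda>h. k ** h ** matrix_inv k) ` centralizer_O f = centralizer_O g"
  shows "same_block_data f g"
proof -
  have "centralizer_O (k ** f ** transpose k) = centralizer_O g"
    using conj_centralizer_O[OF k, of f] eq matrix_inv_orth[OF k] by simp
  moreover have "orthogonal_matrix (k ** f ** transpose k)" using k f by (simp add: orthogonal_matrix_mul)
  ultimately have "same_block_data (k ** f ** transpose k) g"
    using equal_centralizers_block_data g by blast
  then show ?thesis using same_block_data_trans conj_same_block_data[OF k f] by blast
qed

section \<open>Real dimension of complex subspaces\<close>

text \<open>\<open>complex^'n\<close> is a real vector space via \<open>*\<^sub>R\<close> and a complex one via \<open>*s\<close> (the \<open>vec\<close> locale).\<close>
lemma scaleR_complex_vec: "r *\<^sub>R (v :: complex^'n) = complex_of_real r *s v"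
  by (simp add: vec_eq_iff complex_eq_iff)

lemma scale_complex_split: "z *s (v :: complex^'n) = Re z *\<^sub>R v + Im z *\<^sub>R (\<i> *s v)"
  by (simp add: vec_eq_iff complex_eq_iff)

lemma realified_basis_disjoint:
  fixes B :: "(complex^'n) set"
  assumes B: "vec.independent B"
  shows "B \<inter> (\<lambda>v. \<i> *s v) ` B = {}"
proof (rule ccontr)
  assume "B \<inter> (\<lambda>v. \<i> *s v) ` B \<noteq> {}"
  then obtain b b' where bb: "b \<in> B" "b' \<in> B" "b = \<i> *s b'" by auto
  show False
  proof (cases "b = b'")
    case True
    then have "(1 - \<i>) *s b = 0" using bb(3) by (simp add: vec_eq_iff algebra_simps)
    then have "b = 0" by (simp add: vec_eq_iff)
    then show False using B bb(1) vec.dependent_zero by blast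
  next
    case False
    have "b \<in> vec.span (B - {b})" using bb False by (simp add: vec.span_base vec.span_scale)
    then show False using B bb(1) vec.dependent_def by blast
  qed
qed

lemma realified_basis_independent:
  fixes B :: "(complex^'n) set"
  assumes B: "vec.independent B"
  shows "independent (B \<union> (\<lambda>v. \<i> *s v) ` B)"
proof -
  define i where "i = (\<lambda>v::complex^'n. \<i> *s v)"
  define R where "R = B \<union> i ` B"
  have fB: "finite B" using B vec.independent_bound_general by blast
  have inji: "inj i" unfolding i_def inj_def by (simp add: vec_eq_iff)
  have disj: "B \<inter> i ` B = {}" using realified_basis_disjoint[OF B] by (simp add: i_def)
  have sum_R: "(\<Sum>v\<in>R. u v *\<^sub>R v) = (\<Sum>b\<in>B. Complex (u b) (u (i b)) *s b)" for u
  proof -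
    have "(\<Sum>v\<in>R. u v *\<^sub>R v) = (\<Sum>v\<in>B. u v *\<^sub>R v) + (\<Sum>v\<in>i ` B. u v *\<^sub>R v)"
      using fB disj by (simp add: R_def sum.union_disjoint)
    also have "(\<Sum>v\<in>i ` B. u v *\<^sub>R v) = (\<Sum>b\<in>B. u (i b) *\<^sub>R i b)"
      using inji by (simp add: sum.reindex inj_on_subset)
    finally show ?thesis
      by (simp add: sum.distrib[symmetric] scale_complex_split[of "Complex _ _"] i_def)
  qed
  have "independent R"
    unfolding independent_explicit
  proof (intro conjI allI impI ballI)
    show "finite R" using fB by (simp add: R_def)
    fix u v assume z: "(\<Sum>v\<in>R. u v *\<^sub>R v) = 0" and v: "v \<in> R"
    have ind: "\<forall>c. (\<Sum>v\<in>B. c v *s v) = 0 \<longrightarrow> (\<forall>v\<in>B. c v = 0)"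
      using B unfolding vec.independent_explicit by blast
    have "\<forall>b\<in>B. Complex (u b) (u (i b)) = 0"
      using ind[rule_format, of "\<lambda>b. Complex (u b) (u (i b))"] z[unfolded sum_R] by blast
    then have "\<forall>b\<in>B. u b = 0 \<and> u (i b) = 0" by (simp add: complex_eq_iff)
    then show "u v = 0" using v by (auto simp: R_def)
  qed
  then show ?thesis by (simp add: R_def i_def)
qed

lemma realified_basis_card:
  fixes B :: "(complex^'n) set"
  assumes B: "vec.independent B"
  shows "card (B \<union> (\<lambda>v. \<i> *s v) ` B) = 2 * card B"
proof -
  have "finite B" using B vec.independent_bound_general by blast
  moreover have "inj (\<lambda>v::complex^'n. \<i> *s v)" unfolding inj_def by (simp add: vec_eq_iff)
  ultimately show ?thesis
    using realified_basis_disjoint[OF B] by (simp add: card_Un_disjoint card_image inj_on_subset)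
qed

lemma real_dim_complex_subspace:
  fixes E :: "(complex^'n) set"
  assumes E: "vec.subspace E"
  shows "dim E = 2 * vec.dim E"
proof -
  obtain B where B: "B \<subseteq> E" "vec.independent B" "E \<subseteq> vec.span B" "card B = vec.dim E"
    using vec.basis_exists by blast
  have fB: "finite B" using B(2) vec.independent_bound_general by blast
  define R where "R = B \<union> (\<lambda>v. \<i> *s v) ` B"
  have sE: "subspace E"
    using E unfolding subspace_def vec.subspace_def by (simp add: scaleR_complex_vec)
  have "span R = E"
  proof
    have "R \<subseteq> E" using B(1) E by (auto simp: R_def vec.subspace_scale)
    then show "span R \<subseteq> E" using sE by (simp add: span_minimal)
  next
    show "E \<subseteq> span R"
    proof
      fix x assume "x \<in> E"
      then obtain u where x: "x = (\<Sum>v\<in>B. u v *s v)" using B(3) vec.span_finite[OF fB] by blast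
      have "x = (\<Sum>v\<in>B. Re (u v) *\<^sub>R v + Im (u v) *\<^sub>R (\<i> *s v))" unfolding x
        by (simp add: scale_complex_split[of "u _"])
      also have "\<dots> \<in> span R"
        by (intro span_sum span_add span_scale span_base) (auto simp: R_def)
      finally show "x \<in> span R" .
    qed
  qed
  then have "dim E = card R"
    using realified_basis_independent[OF B(2)] dim_span_eq_card_independent unfolding R_def by metis
  then show ?thesis using realified_basis_card[OF B(2)] B(4) by (simp add: R_def)
qed

section \<open>The Segre symbol in terms of the blocks\<close>

definition cvec :: "real^'n \<Rightarrow> real^'n \<Rightarrow> complex^'n" where
  "cvec x y = (\<chi> i. Complex (x$i) (y$i))"
definition re_vec :: "complex^'n \<Rightarrow> real^'n" where "re_vec v = (\<chi> i. Re (v$i))"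
definition im_vec :: "complex^'n \<Rightarrow> real^'n" where "im_vec v = (\<chi> i. Im (v$i))"

lemma cvec_re_im: "cvec (re_vec v) (im_vec v) = v"
  by (simp add: cvec_def re_vec_def im_vec_def vec_eq_iff complex_eq_iff)

lemma cvec_eq0: "cvec x y = 0 \<longleftrightarrow> x = 0 \<and> y = 0"
  by (auto simp: cvec_def vec_eq_iff complex_eq_iff)

lemma cvec_inj: "cvec x y = cvec x' y' \<longleftrightarrow> x = x' \<and> y = y'"
  by (auto simp: cvec_def vec_eq_iff complex_eq_iff)

lemma cvec_add: "cvec (x + x') (y + y') = cvec x y + cvec x' y'"
  by (simp add: cvec_def vec_eq_iff complex_eq_iff)

lemma cvec_scaleR: "cvec (r *\<^sub>R x) (r *\<^sub>R y) = r *\<^sub>R cvec x y"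
  by (simp add: cvec_def vec_eq_iff complex_eq_iff)

lemma cmat_eigen_iff: "cmat A *v cvec x y = z *s cvec x y \<longleftrightarrow>
   A *v x = Re z *\<^sub>R x - Im z *\<^sub>R y \<and> A *v y = Im z *\<^sub>R x + Re z *\<^sub>R y"
proof -
  have "cmat A *v cvec x y = cvec (A *v x) (A *v y)"
    by (simp add: cvec_def cmat_def matrix_vector_mult_def vec_eq_iff complex_eq_iff)
  moreover have "z *s cvec x y = cvec (Re z *\<^sub>R x - Im z *\<^sub>R y) (Im z *\<^sub>R x + Re z *\<^sub>R y)"
    by (simp add: cvec_def vec_eq_iff complex_eq_iff)
  ultimately show ?thesis by (simp add: cvec_inj)
qed

context orth_map begin

text \<open>A real pair \<open>x, y\<close> on which \<open>F\<close> acts as the rotation by \<open>(a, b)\<close>, \<open>a\<^sup>2 + b\<^sup>2 = 1\<close>, lies in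
  the block \<open>W (2a)\<close>; isometry of \<open>F\<close> forces \<open>a\<^sup>2 + b\<^sup>2 = 1\<close>.\<close>
lemma eigpair_W:
  assumes ex: "F x = a *\<^sub>R x - b *\<^sub>R y" and ey: "F y = b *\<^sub>R x + a *\<^sub>R y" and ab: "a*a + b*b = 1"
  shows "x \<in> W (2*a)"
proof -
  have "F (F x) = a *\<^sub>R F x - b *\<^sub>R F y"
    by (simp add: ex matrix_vector_mult_diff_distrib matrix_vector_mult_scaleR)
  also have "\<dots> = (2*a) *\<^sub>R F x - x"
  proof -
    have bb: "b * b = 1 - a * a" using ab by simp
    show ?thesis unfolding ex ey by (simp add: vec_eq_iff algebra_simps bb)
  qed
  finally show "x \<in> W (2*a)" by (rule FF_W)
qed

lemma eigpair_norm:
  assumes ex: "F x = a *\<^sub>R x - b *\<^sub>R y" and ey: "F y = b *\<^sub>R x + a *\<^sub>R y"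
  shows "(a*a + b*b) * (x \<bullet> x + y \<bullet> y) = x \<bullet> x + y \<bullet> y"
proof -
  have "x \<bullet> x + y \<bullet> y = F x \<bullet> F x + F y \<bullet> F y" by simp
  also have "\<dots> = (a*a + b*b) * (x \<bullet> x + y \<bullet> y)"
    unfolding ex ey by (simp add: inner_diff_left inner_diff_right inner_add_left inner_add_right
        inner_commute algebra_simps)
  finally show ?thesis by simp
qed

text \<open>The eigenvalue \<open>e\<^sup>i\<^sup>\<theta>\<close> belonging to the block \<open>W c\<close>, \<open>c = 2 cos \<theta>\<close>.\<close>
definition zeta :: "real \<Rightarrow> complex" where "zeta c = Complex (c/2) (sn c)"

lemma zeta_inj: "inj zeta"
  by (rule injI) (simp add: zeta_def complex_eq_iff)

lemma eigenvector_zeta: assumes c: "\<bar>c\<bar> < 2" and x: "x \<in> W c"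
  shows "cmat f *v cvec x (- J c x) = zeta c *s cvec x (- J c x)"
proof -
  have "F x = (c/2) *\<^sub>R x - sn c *\<^sub>R (- J c x)" using F_J[OF c, of x] by simp
  moreover have "F (- J c x) = sn c *\<^sub>R x + (c/2) *\<^sub>R (- J c x)"
    using F_J[OF c, of "J c x"] J_J[OF c x] linear_neg[OF linF, of "J c x"] by simp
  ultimately show ?thesis by (simp add: cmat_eigen_iff zeta_def)
qed

lemma nonreal_eigenvalue_is_zeta:
  assumes z: "Im z > 0" "v \<noteq> 0" "cmat f *v v = z *s v"
  shows "z \<in> zeta ` {c\<in>spec. \<bar>c\<bar> < 2}"
proof -
  define x where "x = re_vec v"
  define y where "y = im_vec v"
  have v: "v = cvec x y" by (simp add: x_def y_def cvec_re_im)
  have e: "F x = Re z *\<^sub>R x - Im z *\<^sub>R y" "F y = Im z *\<^sub>R x + Re z *\<^sub>R y"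
    using z(3) unfolding v cmat_eigen_iff by auto
  have ab: "Re z * Re z + Im z * Im z = 1"
  proof -
    have "x \<noteq> 0 \<or> y \<noteq> 0" using z(2) v cvec_eq0 by auto
    then have "x \<bullet> x + y \<bullet> y > 0"
      by (metis add_nonneg_pos add_pos_nonneg inner_gt_zero_iff inner_ge_zero)
    then show ?thesis using eigpair_norm[OF e] by simp
  qed
  define c where "c = 2 * Re z"
  have xW: "x \<in> W c" using eigpair_W[OF e ab] by (simp add: c_def)
  have "y \<in> W c" using eigpair_W[of y "Re z" "- Im z" x] e ab by (simp add: c_def algebra_simps)
  then have "c \<in> spec" using xW z(2) v cvec_eq0 unfolding spec_def by auto
  moreover have "\<bar>c\<bar> < 2"
  proof -
    have "Re z * Re z < 1" using ab z(1) by (smt (verit) mult_pos_pos)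
    then have "\<bar>Re z\<bar> < 1" by (simp add: abs_square_less_1[symmetric] power2_eq_square)
    then show ?thesis by (simp add: c_def)
  qed
  moreover have "z = zeta c"
  proof -
    have "1 - (c/2)^2 = Im z * Im z" using ab by (simp add: c_def power2_eq_square)
    then have "sn c = sqrt (Im z * Im z)" by (simp add: sn_def)
    also have "\<dots> = Im z" using z(1) by simp
    finally show ?thesis by (simp add: zeta_def c_def complex_eq_iff)
  qed
  ultimately show ?thesis by blast
qed

lemma nonreal_eig_reps_eq: "nonreal_eig_reps f = zeta ` {c\<in>spec. \<bar>c\<bar> < 2}"
proof safe
  fix z assume "z \<in> nonreal_eig_reps f"
  then show "z \<in> zeta ` {c \<in> spec. \<bar>c\<bar> < 2}"
    using nonreal_eigenvalue_is_zeta by (auto simp: nonreal_eig_reps_def)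
next
  fix c assume c: "c \<in> spec" "\<bar>c\<bar> < 2"
  obtain x where x: "x \<in> W c" "x \<noteq> 0" using W_nonzero[OF c(1)] .
  have "cvec x (- J c x) \<noteq> 0" using x(2) cvec_eq0 by blast
  moreover have "Im (zeta c) > 0" using sn_pos[OF c(2)] by (simp add: zeta_def)
  ultimately show "zeta c \<in> nonreal_eig_reps f"
    using eigenvector_zeta[OF c(2) x(1)] unfolding nonreal_eig_reps_def by blast
qed

lemma complex_eigenspace_zeta: assumes c: "\<bar>c\<bar> < 2"
  shows "{v. cmat f *v v = zeta c *s v} = (\<lambda>x. cvec x (- J c x)) ` W c"
proof safe
  fix v assume ev: "cmat f *v v = zeta c *s v"
  define x where "x = re_vec v"
  define y where "y = im_vec v"
  have v: "v = cvec x y" by (simp add: x_def y_def cvec_re_im)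
  have e: "F x = (c/2) *\<^sub>R x - sn c *\<^sub>R y" "F y = sn c *\<^sub>R x + (c/2) *\<^sub>R y"
    using ev by (simp_all add: v cmat_eigen_iff zeta_def)
  have "(c/2) * (c/2) + sn c * sn c = 1" using sn_sq[OF c] by (simp add: power2_eq_square)
  then have xW: "x \<in> W c" using eigpair_W[OF e] by simp
  have "sn c *\<^sub>R J c x = sn c *\<^sub>R (- y)" using sn_J[OF c, of x] e(1) by simp
  then have "J c x = - y" using sn_pos[OF c] by (metis less_irrefl scaleR_cancel_left)
  then have "v = cvec x (- J c x)" using v by simp
  then show "v \<in> (\<lambda>x. cvec x (- J c x)) ` W c" using xW by blast
next
  fix x assume "x \<in> W c"
  then show "cmat f *v cvec x (- J c x) = zeta c *s cvec x (- J c x)" using eigenvector_zeta[OF c] by simp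
qed

lemma ceig_dim_zeta: assumes c: "\<bar>c\<bar> < 2" shows "2 * ceig_dim f (zeta c) = dim (W c)"
proof -
  define E where "E = {v :: complex^'n. cmat f *v v = zeta c *s v}"
  define \<phi> where "\<phi> x = cvec x (- J c x)" for x
  have mvs: "cmat f *v (a *s v) = a *s (cmat f *v v)" for a v
    by (simp add: vec_eq_iff matrix_vector_mult_def sum_distrib_left mult.left_commute)
  have sub: "vec.subspace E" unfolding E_def vec.subspace_def
    by (simp add: mvs matrix_vector_right_distrib vector_ssub_ldistrib mult.commute)
  have lin: "linear \<phi>"
    by (rule linearI) (simp_all add: \<phi>_def linear_add[OF J_lin] linear_scale[OF J_lin]
        cvec_add[symmetric] cvec_scaleR[symmetric])
  have inj: "inj \<phi>" by (rule injI) (simp add: \<phi>_def cvec_inj)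
  have "E = \<phi> ` W c" using complex_eigenspace_zeta[OF c] by (simp add: E_def \<phi>_def)
  then have "dim E = dim (W c)" using dim_image_eq[OF lin inj_on_subset[OF inj subset_UNIV]] by simp
  moreover have "dim E = 2 * vec.dim E" by (rule real_dim_complex_subspace[OF sub])
  ultimately show ?thesis by (simp add: ceig_dim_def E_def)
qed

lemma dim_even: "\<bar>c\<bar> < 2 \<Longrightarrow> even (dim (W c))"
  using ceig_dim_zeta by (metis dvd_triv_left)

lemma pm1_eigs_eq: "pm1_eigs f = (\<lambda>c. c/2) ` {c\<in>spec. \<not> \<bar>c\<bar> < 2}"
proof -
  have e: "{v. f *v v = e *s v} = W (2*e)" if "e = 1 \<or> e = -1" for e
    using that by (auto simp: W_2 W_m2 scalar_mult_eq_scaleR)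
  have "e \<in> pm1_eigs f \<longleftrightarrow> (e = 1 \<or> e = -1) \<and> 2*e \<in> spec" for e
  proof -
    have "e \<in> pm1_eigs f \<longleftrightarrow> (e = 1 \<or> e = -1) \<and> (\<exists>v. v \<noteq> 0 \<and> v \<in> {v. f *v v = e *s v})"
      by (auto simp: pm1_eigs_def)
    also have "\<dots> \<longleftrightarrow> (e = 1 \<or> e = -1) \<and> 2*e \<in> spec"
      using e W_sub subspace_0 unfolding spec_def by blast
    finally show ?thesis .
  qed
  moreover have "c \<in> spec \<and> \<not> \<bar>c\<bar> < 2 \<longleftrightarrow> c \<in> spec \<and> (c = 2 \<or> c = -2)" for c
    using spec_bound by fastforce
  ultimately show ?thesis by (auto simp: image_iff)
qed

lemma reig_dim_eq: "c \<in> spec \<Longrightarrow> \<not> \<bar>c\<bar> < 2 \<Longrightarrow> reig_dim f (c/2) = dim (W c)"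
proof -
  assume "c \<in> spec" "\<not> \<bar>c\<bar> < 2"
  then have "c = 2 \<or> c = -2" by (rule real_block)
  then have "{v. f *v v = (c/2) *s v} = W c" by (auto simp: W_2 W_m2 scalar_mult_eq_scaleR)
  then show ?thesis by (simp add: reig_dim_def dim_vec_eq)
qed

lemma segre_eq: "segre f = (image_mset (\<lambda>c. dim (W c) div 2) (mset_set {c\<in>spec. \<bar>c\<bar> < 2}),
                            image_mset (\<lambda>c. dim (W c)) (mset_set {c\<in>spec. \<not> \<bar>c\<bar> < 2}))"
proof -
  have "image_mset (ceig_dim f) (mset_set (nonreal_eig_reps f)) =
        image_mset (ceig_dim f \<circ> zeta) (mset_set {c\<in>spec. \<bar>c\<bar> < 2})"
    unfolding nonreal_eig_reps_eq multiset.map_comp[symmetric] using zeta_inj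
    by (simp add: image_mset_mset_set inj_on_subset)
  also have "\<dots> = image_mset (\<lambda>c. dim (W c) div 2) (mset_set {c\<in>spec. \<bar>c\<bar> < 2})"
    using finite_spec ceig_dim_zeta by (intro image_mset_cong) fastforce
  moreover have "image_mset (reig_dim f) (mset_set (pm1_eigs f)) =
        image_mset (reig_dim f \<circ> (\<lambda>c. c/2)) (mset_set {c\<in>spec. \<not> \<bar>c\<bar> < 2})"
    unfolding pm1_eigs_eq multiset.map_comp[symmetric] by (simp add: image_mset_mset_set inj_on_def)
  moreover have "\<dots> = image_mset (\<lambda>c. dim (W c)) (mset_set {c\<in>spec. \<not> \<bar>c\<bar> < 2})"
    using finite_spec reig_dim_eq by (intro image_mset_cong) auto
  ultimately show ?thesis by (simp add: segre_def)
qed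

end

section \<open>Equal Segre symbols are equal block data\<close>

lemma mset_image_eq_bij:
  assumes "finite A" "finite B" "image_mset \<phi> (mset_set A) = image_mset \<psi> (mset_set B)"
  shows "\<exists>\<tau>. bij_betw \<tau> A B \<and> (\<forall>a\<in>A. \<psi> (\<tau> a) = \<phi> a)"
  using assms
proof (induction A arbitrary: B rule: finite_induct)
  case empty
  then have "B = {}" by (metis image_mset_is_empty_iff mset_set.infinite mset_set_empty_iff mset_set.empty)
  then show ?case by (auto simp: bij_betw_def)
next
  case (insert a A)
  have "image_mset \<phi> (mset_set (insert a A)) = add_mset (\<phi> a) (image_mset \<phi> (mset_set A))"
    using insert by simp
  then have "\<phi> a \<in># image_mset \<psi> (mset_set B)" using insert(5) by simp
  then obtain b where b: "b \<in> B" "\<psi> b = \<phi> a" using insert(4) by auto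
  have "mset_set B = add_mset b (mset_set (B - {b}))" using b(1) insert(4) by (simp add: mset_set.remove)
  then have "image_mset \<psi> (mset_set B) = add_mset (\<phi> a) (image_mset \<psi> (mset_set (B - {b})))"
    using b by simp
  then have "image_mset \<phi> (mset_set A) = image_mset \<psi> (mset_set (B - {b}))"
    using insert(5) insert by simp
  then obtain \<tau> where t: "bij_betw \<tau> A (B - {b})" "\<forall>a\<in>A. \<psi> (\<tau> a) = \<phi> a"
    using insert.IH[of "B - {b}"] insert(4) by blast
  define \<tau>' where "\<tau>' = \<tau>(a := b)"
  have "bij_betw \<tau>' A (B - {b})"
    using t(1) insert(2) by (subst bij_betw_cong[of A \<tau>' \<tau>]) (auto simp: \<tau>'_def)
  then have "bij_betw \<tau>' (A \<union> {a}) ((B - {b}) \<union> {b})"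
    by (rule bij_betw_combine) (auto simp: \<tau>'_def bij_betw_def)
  moreover have "A \<union> {a} = insert a A" "(B - {b}) \<union> {b} = B" using b(1) by auto
  moreover have "\<forall>x\<in>insert a A. \<psi> (\<tau>' x) = \<phi> x" using t(2) b(2) insert(2) by (auto simp: \<tau>'_def)
  ultimately show ?case by auto
qed

lemma bij_image_mset_eq:
  assumes "bij_betw \<sigma> A B" "\<And>a. a \<in> A \<Longrightarrow> \<psi> (\<sigma> a) = \<phi> a"
  shows "image_mset \<phi> (mset_set A) = image_mset \<psi> (mset_set B)"
proof -
  have "mset_set B = image_mset \<sigma> (mset_set A)"
    using assms(1) by (simp add: bij_betw_def image_mset_mset_set)
  then have "image_mset \<psi> (mset_set B) = image_mset (\<psi> \<circ> \<sigma>) (mset_set A)" by (simp add: multiset.map_comp)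
  also have "\<dots> = image_mset \<phi> (mset_set A)"
  proof (rule image_mset_cong)
    fix x assume "x \<in># mset_set A"
    then have "x \<in> A" by (cases "finite A") auto
    then show "(\<psi> \<circ> \<sigma>) x = \<phi> x" using assms(2) by simp
  qed
  finally show ?thesis by simp
qed

lemma bij_restrict:
  assumes "bij_betw \<sigma> A B" "\<And>a. a \<in> A \<Longrightarrow> P a \<longleftrightarrow> Q (\<sigma> a)"
  shows "bij_betw \<sigma> {a\<in>A. P a} {b\<in>B. Q b}"
  using assms unfolding bij_betw_def inj_on_def by (auto simp: image_iff)

lemma block_data_segre:
  fixes f g :: "real^'n^'n"
  assumes f: "orthogonal_matrix f" and g: "orthogonal_matrix g" and b: "same_block_data f g"
  shows "segre f = segre g"
proof -
  interpret f: orth_map f by unfold_locales (rule f)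
  interpret g: orth_map g by unfold_locales (rule g)
  obtain \<sigma> where s: "bij_betw \<sigma> f.spec g.spec"
      "\<forall>c\<in>f.spec. dim (f.W c) = dim (g.W (\<sigma> c)) \<and> (\<bar>c\<bar> < 2 \<longleftrightarrow> \<bar>\<sigma> c\<bar> < 2)"
    using b unfolding same_block_data_def by blast
  have b1: "bij_betw \<sigma> {c\<in>f.spec. \<bar>c\<bar> < 2} {c\<in>g.spec. \<bar>c\<bar> < 2}"
    and b2: "bij_betw \<sigma> {c\<in>f.spec. \<not> \<bar>c\<bar> < 2} {c\<in>g.spec. \<not> \<bar>c\<bar> < 2}"
    using s by (auto intro!: bij_restrict)
  have "image_mset (\<lambda>c. dim (f.W c) div 2) (mset_set {c\<in>f.spec. \<bar>c\<bar> < 2})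
      = image_mset (\<lambda>c. dim (g.W c) div 2) (mset_set {c\<in>g.spec. \<bar>c\<bar> < 2})"
    using s(2) by (intro bij_image_mset_eq[OF b1]) auto
  moreover have "image_mset (\<lambda>c. dim (f.W c)) (mset_set {c\<in>f.spec. \<not> \<bar>c\<bar> < 2})
      = image_mset (\<lambda>c. dim (g.W c)) (mset_set {c\<in>g.spec. \<not> \<bar>c\<bar> < 2})"
    using s(2) by (intro bij_image_mset_eq[OF b2]) auto
  ultimately show ?thesis unfolding f.segre_eq g.segre_eq by simp
qed

text \<open>Conversely, matching the multisets separately on rotation and real blocks gives a
  bijection of the spectra; on rotation blocks the dimensions agree because they are even.\<close>
lemma segre_block_data:
  fixes f g :: "real^'n^'n"
  assumes f: "orthogonal_matrix f" and g: "orthogonal_matrix g" and eq: "segre f = segre g"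
  shows "same_block_data f g"
proof -
  interpret f: orth_map f by unfold_locales (rule f)
  interpret g: orth_map g by unfold_locales (rule g)
  let ?Rotf = "{c\<in>f.spec. \<bar>c\<bar> < 2}" and ?Realf = "{c\<in>f.spec. \<not> \<bar>c\<bar> < 2}"
  let ?Rotg = "{c\<in>g.spec. \<bar>c\<bar> < 2}" and ?Realg = "{c\<in>g.spec. \<not> \<bar>c\<bar> < 2}"
  have m1: "image_mset (\<lambda>c. dim (f.W c) div 2) (mset_set ?Rotf) = image_mset (\<lambda>c. dim (g.W c) div 2) (mset_set ?Rotg)"
    and m2: "image_mset (\<lambda>c. dim (f.W c)) (mset_set ?Realf) = image_mset (\<lambda>c. dim (g.W c)) (mset_set ?Realg)"
    using eq unfolding f.segre_eq g.segre_eq by auto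
  obtain t1 where t1: "bij_betw t1 ?Rotf ?Rotg" "\<forall>c\<in>?Rotf. dim (g.W (t1 c)) div 2 = dim (f.W c) div 2"
    using mset_image_eq_bij[OF _ _ m1] f.finite_spec g.finite_spec by auto
  obtain t2 where t2: "bij_betw t2 ?Realf ?Realg" "\<forall>c\<in>?Realf. dim (g.W (t2 c)) = dim (f.W c)"
    using mset_image_eq_bij[OF _ _ m2] f.finite_spec g.finite_spec by auto
  define \<sigma> where "\<sigma> c = (if \<bar>c\<bar> < 2 then t1 c else t2 c)" for c
  have "bij_betw \<sigma> ?Rotf ?Rotg" using t1(1) by (rule bij_betw_cong[THEN iffD1, rotated]) (simp add: \<sigma>_def)
  moreover have "bij_betw \<sigma> ?Realf ?Realg" using t2(1) by (rule bij_betw_cong[THEN iffD1, rotated]) (simp add: \<sigma>_def)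
  ultimately have "bij_betw \<sigma> (?Rotf \<union> ?Realf) (?Rotg \<union> ?Realg)" by (rule bij_betw_combine) auto
  moreover have "?Rotf \<union> ?Realf = f.spec" "?Rotg \<union> ?Realg = g.spec" by auto
  ultimately have bij: "bij_betw \<sigma> f.spec g.spec" by simp
  have "dim (f.W c) = dim (g.W (\<sigma> c)) \<and> (\<bar>c\<bar> < 2 \<longleftrightarrow> \<bar>\<sigma> c\<bar> < 2)" if c: "c \<in> f.spec" for c
  proof (cases "\<bar>c\<bar> < 2")
    case True
    then have "t1 c \<in> ?Rotg" using c bij_betwE[OF t1(1)] by blast
    then have "even (dim (g.W (t1 c)))" "\<bar>t1 c\<bar> < 2" using g.dim_even by auto
    moreover have "even (dim (f.W c))" using f.dim_even True by simp
    ultimately have "dim (g.W (t1 c)) = dim (f.W c)" using t1(2) c True by (metis (mono_tags) dvd_div_mult_self mem_Collect_eq)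
    then show ?thesis using True \<open>\<bar>t1 c\<bar> < 2\<close> by (simp add: \<sigma>_def)
  next
    case False
    then have "t2 c \<in> ?Realg" using c bij_betwE[OF t2(1)] by blast
    then show ?thesis using t2(2) c False by (simp add: \<sigma>_def)
  qed
  then show ?thesis unfolding same_block_data_def using bij by blast
qed

theorem mainTheorem1:
  fixes f g :: "real^'n^'n"
  assumes "CARD('n) \<ge> 2"
    and "f \<in> orth_group" and "g \<in> orth_group"
  shows "segre f = segre g \<longleftrightarrow>
         (\<exists>k \<in> orth_group. (\<lambda>h. k ** h ** matrix_inv k) ` centralizer_O f = centralizer_O g)"
proof -
  have f: "orthogonal_matrix f" and g: "orthogonal_matrix g" using assms by (auto simp: orth_group_def)
  have "segre f = segre g \<longleftrightarrow> same_block_data f g"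
    using segre_block_data[OF f g] block_data_segre[OF f g] by blast
  also have "\<dots> \<longleftrightarrow> (\<exists>k. orthogonal_matrix k \<and> (\<lambda>h. k ** h ** matrix_inv k) ` centralizer_O f = centralizer_O g)"
    using block_data_conj_centralizers[OF f g] conj_centralizers_block_data[OF f g] by blast
  finally show ?thesis by (simp add: orth_group_def)
qed

end
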